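(* Let $\mathcal{M}:(0,\infty)\to(0,\infty)$ be the Mina margin map. Then: (1) $\mathcal{M}(s(x))=\mathcal{M}(x)$ for all $x\in(0,\infty)$; (2) $\mathcal{M}$ is continuous on $(0,\infty)$ and $\mathcal{M}(x)=\Big(\sum_{k\in\mathbb{Z}}\prod_{i=0}^k(c_i(x)-1)\Big)^{-1}\cdot x\sum_{k\in\mathbb{Z}}\prod_{i=0}^k(d_i(x)-1)$; (3) $\mathcal{M}((0,\infty))=[\lambda,\lambda^{-1}]$ for some $\lambda\in(0,0.999904]$ (this $\lambda$ is the infimum of Mina margins of positive ABMN solutions).
   Context: ABMN system on $\mathbb{Z}$: real variables $a_i,b_i\ge0$, $m_i,n_i$ with, for all $i$, $(a_i+b_i)(m_i+a_i)=a_im_{i+1}+b_im_{i-1}$, $(a_i+b_i)(n_i+b_i)=a_in_{i+1}+b_in_{i-1}$, $(a_i+b_i)^2=b_i(m_{i+1}-m_{i-1})$, $(a_i+b_i)^2=a_i(n_{i-1}-n_{i+1})$; positive if all $a_i,b_i>0$; $m_{\pm\infty},n_{\pm\infty}$ are the (real) limits as $i\to\pm\infty$; the Mina margin is $\frac{n_{-\infty}-n_\infty}{m_\infty-m_{-\infty}}$; the central ratio is $\frac{n_{-1}-n_0}{m_0-m_{-1}}$. A positive solution is standard if $m_{-\infty}=0$, $n_\infty=0$, $m_\infty=1$; for each $x>0$ there is exactly one standard solution $(a^{\rm st}(x),b^{\rm st}(x),m^{\rm st}(x),n^{\rm st}(x))$ with central ratio $x$. The Mina margin map is $\mathcal{M}(x)=n^{\rm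 st}_{-\infty}(x)$, the Mina margin of that solution. Functions: for $x>0$, $\omega=\sqrt{8x+1}$, $c(x)=\frac{(\omega+3)^2}{16}$, $d(x)=\frac{(\omega+3)^2}{8(\omega+1)}$, $s(x)=\frac{(\omega-1)^2}{4(\omega+7)}$; $s_{-1}(x)=1/s(1/x)$, $s_0(x)=x$, $s_i=s\circ s_{i-1}$, $s_{-i}=s_{-1}\circ s_{-(i-1)}$ ($i\in\mathbb{N}_+$); $c_j=c\circ s_j$, $d_j=d\circ s_j$. Product convention: $\prod_{i=0}^k h_i=h_0\cdots h_k$ for $k\ge0$, $=1$ for $k=-1$, $=h_{k+1}^{-1}\cdots h_{-1}^{-1}$ for $k\le-2$. *)

theory Defs
  imports "HOL-Analysis.Analysis"
begin

type_synonym zseq = "int \<Rightarrow> real"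

definition abmn :: "zseq \<Rightarrow> zseq \<Rightarrow> zseq \<Rightarrow> zseq \<Rightarrow> bool" where
  "abmn a b m n \<longleftrightarrow> (\<forall>i::int.
      a i \<ge> 0 \<and> b i \<ge> 0 \<and>
      (a i + b i) * (m i + a i) = a i * m (i+1) + b i * m (i-1) \<and>
      (a i + b i) * (n i + b i) = a i * n (i+1) + b i * n (i-1) \<and>
      (a i + b i)^2 = b i * (m (i+1) - m (i-1)) \<and>
      (a i + b i)^2 = a i * (n (i-1) - n (i+1)))"

definition abmn_positive :: "zseq \<Rightarrow> zseq \<Rightarrow> zseq \<Rightarrow> zseq \<Rightarrow> bool" where
  "abmn_positive a b m n \<longleftrightarrow> abmn a b m n \<and> (\<forall>i. a i > 0 \<and> b i > 0)"

definition has_limits :: "zseq \<Rightarrow> zseq \<Rightarrow> bool" where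
  "has_limits m n \<longleftrightarrow> (\<exists>L. (m \<longlongrightarrow> L) at_top) \<and> (\<exists>L. (m \<longlongrightarrow> L) at_bot)
      \<and> (\<exists>L. (n \<longlongrightarrow> L) at_top) \<and> (\<exists>L. (n \<longlongrightarrow> L) at_bot)"

definition lim_top :: "zseq \<Rightarrow> real" where "lim_top f = Lim at_top f"
definition lim_bot :: "zseq \<Rightarrow> real" where "lim_bot f = Lim at_bot f"

definition mina_margin :: "zseq \<Rightarrow> zseq \<Rightarrow> real" where
  "mina_margin m n = (lim_bot n - lim_top n) / (lim_top m - lim_bot m)"

definition central_ratio :: "zseq \<Rightarrow> zseq \<Rightarrow> real" where
  "central_ratio m n = (n (-1) - n 0) / (m 0 - m (-1))"

definition abmn_standard :: "zseq \<Rightarrow> zseq \<Rightarrow> zseq \<Rightarrow> zseq \<Rightarrow> bool" where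
  "abmn_standard a b m n \<longleftrightarrow> abmn_positive a b m n \<and> has_limits m n \<and>
     (m \<longlongrightarrow> 0) at_bot \<and> (n \<longlongrightarrow> 0) at_top \<and> (m \<longlongrightarrow> 1) at_top"

definition standard_sol :: "real \<Rightarrow> zseq \<times> zseq \<times> zseq \<times> zseq" where
  "standard_sol x = (THE (a,b,m,n). abmn_standard a b m n \<and> central_ratio m n = x)"

definition mina_map :: "real \<Rightarrow> real" where
  "mina_map x = (case standard_sol x of (a,b,m,n) \<Rightarrow> mina_margin m n)"

definition omega :: "real \<Rightarrow> real" where "omega x = sqrt (8*x + 1)"
definition cfun :: "real \<Rightarrow> real" where "cfun x = (omega x + 3)^2 / 16"
definition dfun :: "real \<Rightarrow> real" where "dfun x = (omega x + 3)^2 / (8 * (omega x + 1))"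
definition sfun :: "real \<Rightarrow> real" where "sfun x = (omega x - 1)^2 / (4 * (omega x + 7))"
definition sfun_inv :: "real \<Rightarrow> real" where "sfun_inv x = 1 / sfun (1 / x)"

definition s_iter :: "int \<Rightarrow> real \<Rightarrow> real" where
  "s_iter j x = (if j \<ge> 0 then (sfun ^^ nat j) x else (sfun_inv ^^ nat (-j)) x)"

definition c_iter :: "int \<Rightarrow> real \<Rightarrow> real" where "c_iter j x = cfun (s_iter j x)"
definition d_iter :: "int \<Rightarrow> real \<Rightarrow> real" where "d_iter j x = dfun (s_iter j x)"

definition prodZ :: "(int \<Rightarrow> real) \<Rightarrow> int \<Rightarrow> real" where
  "prodZ h k = (if k \<ge> 0 then (\<Prod>i\<in>{0..k}. h i)
               else if k = -1 then 1
               else (\<Prod>i\<in>{k+1..-1}. inverse (h i)))"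

end

(*
  For a positive solution put t i = a i / b i.  The ABMN equations say exactly that
  m (i+1) - m i = 2 a i + b i,  m i - m (i-1) = (a i)^2 / b i,  n (i-1) - n i = a i + 2 b i  and
  n i - n (i+1) = (b i)^2 / a i.  Hence the local central ratio (n (i-1) - n i) / (m i - m (i-1))
  equals (t i + 2) / (t i)^2 and is carried to the next one by s, while consecutive increments of
  m and n have the ratios c - 1 and d - 1 evaluated there.  So the increments of m and n are the
  products of c_j(x) - 1 and d_j(x) - 1 scaled by the central increments, and summing them over
  the integers expresses the Mina margin through the central ratio x.  Conversely these products
  define a standard solution for every x > 0, and it is unique, which identifies the Mina margin
  map with the formula.

  Shifting a solution by one site replaces x by s(x) and keeps the margin; reflecting i to -i
  (and exchanging a with b and m with n) replaces x by 1/s(x) and inverts the margin.  So the map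
  is s-invariant with M(1/x) = 1/M(x).  Every orbit of s meets [1, 10], hence the range of the
  continuous map is the compact interval M([1, 10]), which reciprocity forces to be [lam, 1/lam];
  a rigorous numerical enclosure at x = 5.3696125 gives lam <= 0.999904.
*)
theory Submission
  imports Defs "HOL-Real_Asymp.Real_Asymp"
begin

section \<open>Sequences, series and intervals\<close>

lemma filterlim_int_at_bot_iff: "filterlim f F at_bot \<longleftrightarrow> filterlim (\<lambda>k::int. f (- k)) F at_top"
  unfolding filterlim_def at_bot_mirror filtermap_filtermap ..

lemma tendsto_int_at_top_nat: "(g \<longlongrightarrow> L) at_top \<Longrightarrow> (\<lambda>n. g (int n)) \<longlonglongrightarrow> L"
  using filterlim_compose[OF _ filterlim_int_sequentially] by blast

lemma tendsto_int_at_bot_nat: "(g \<longlongrightarrow> L) at_bot \<Longrightarrow> (\<lambda>n. g (- int n)) \<longlonglongrightarrow> L"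
  unfolding filterlim_int_at_bot_iff using tendsto_int_at_top_nat by blast

lemma tendsto_int_shift:
  fixes f :: "int \<Rightarrow> 'a::topological_space"
  shows "(f \<longlongrightarrow> L) at_top \<Longrightarrow> ((\<lambda>i. f (i + c)) \<longlongrightarrow> L) at_top"
    and "(f \<longlongrightarrow> L) at_bot \<Longrightarrow> ((\<lambda>i. f (i + c)) \<longlongrightarrow> L) at_bot"
proof -
  have "filterlim (\<lambda>i. i + c) at_top at_top" "filterlim (\<lambda>i. i + c) at_bot at_bot"
    unfolding filterlim_at_top filterlim_at_bot eventually_at_top_linorder eventually_at_bot_linorder
    by (intro allI, rule_tac x = "Z - c" in exI, force)+
  then show "(f \<longlongrightarrow> L) at_top \<Longrightarrow> ((\<lambda>i. f (i + c)) \<longlongrightarrow> L) at_top"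
    and "(f \<longlongrightarrow> L) at_bot \<Longrightarrow> ((\<lambda>i. f (i + c)) \<longlongrightarrow> L) at_bot"
    using filterlim_compose by blast+
qed

lemma int_shift_invariant:
  assumes "\<And>k. h (k + 1) = h k" shows "h k = h (0::int)"
proof (induction k rule: int_induct[where k = 0])
  case (step1 i)
  then show ?case using assms[of i] by simp
next
  case (step2 i)
  then show ?case using assms[of "i - 1"] by simp
qed simp

lemma eq_if_same_increments:
  fixes f g :: "int \<Rightarrow> real"
  assumes "\<And>k. f (k + 1) - f k = g (k + 1) - g k" "(f \<longlongrightarrow> L) F" "(g \<longlongrightarrow> L) F" "F \<noteq> bot"
  shows "f = g"
proof -
  define c where "c = f 0 - g 0"
  have "f (k + 1) - g (k + 1) = f k - g k" for k using assms(1)[of k] by linarith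
  then have diff: "f k - g k = c" for k
    unfolding c_def using int_shift_invariant[of "\<lambda>k. f k - g k"] by blast
  have "((\<lambda>k. f k - g k) \<longlongrightarrow> 0) F" using tendsto_diff[OF assms(2,3)] by simp
  then have "c = 0" using assms(4) tendsto_const_iff unfolding diff by blast
  with diff show ?thesis by (simp add: fun_eq_iff)
qed

lemma ex_last_step:
  assumes "P k\<^sub>0" and "eventually (\<lambda>k. \<not> P k) at_top"
  shows "\<exists>k::int. P k \<and> \<not> P (k + 1)"
proof (rule ccontr)
  assume "\<not> ?thesis"
  then have "P (k\<^sub>0 + int n)" for n
  proof (induction n)
    case (Suc n)
    then have "P (k\<^sub>0 + int n + 1)" by blast
    then show ?case by (simp add: ac_simps)
  qed (use assms(1) in simp)
  then have "P k" if "k\<^sub>0 \<le> k" for k using that by (metis add.commute le_add_diff_inverse zle_iff_zadd)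
  with assms(2) show False unfolding eventually_at_top_linorder by (metis linorder_linear order.trans)
qed

lemma has_sum_int_split:
  fixes f :: "int \<Rightarrow> real"
  assumes nonneg: "\<And>k. 0 \<le> f k"
    and pos: "(\<lambda>n. f (int n)) sums A" and neg: "(\<lambda>n. f (- int (Suc n))) sums B"
  shows "(f has_sum (A + B)) UNIV"
proof -
  have "(f has_sum A) (range int)"
    using has_sum_reindex[of int UNIV f] sums_nonneg_imp_has_sum[OF pos] nonneg by (simp add: o_def)
  moreover have "inj (\<lambda>n. - int (Suc n))" by (auto simp: inj_def)
  then have "(f has_sum B) (range (\<lambda>n. - int (Suc n)))"
    using has_sum_reindex[of "\<lambda>n. - int (Suc n)" UNIV f] sums_nonneg_imp_has_sum[OF neg] nonneg
    by (simp add: o_def)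
  moreover have "range int \<inter> range (\<lambda>n. - int (Suc n)) = {}" by auto
  ultimately have "(f has_sum (A + B)) (range int \<union> range (\<lambda>n. - int (Suc n)))"
    by (rule has_sum_Un_disjoint)
  moreover have "k \<in> range int \<union> range (\<lambda>n. - int (Suc n))" for k :: int
    by (cases "0 \<le> k") (auto intro: image_eqI[of _ _ "nat k"] image_eqI[of _ _ "nat (- k - 1)"])
  then have "range int \<union> range (\<lambda>n. - int (Suc n)) = UNIV" by blast
  ultimately show ?thesis by simp
qed

lemma has_sum_increments:
  fixes g :: "int \<Rightarrow> real"
  assumes mono: "\<And>k. g k \<le> g (k + 1)"
    and top: "(g \<longlongrightarrow> A) at_top" and bot: "(g \<longlongrightarrow> B) at_bot"
  shows "((\<lambda>k. g (k + 1) - g k) has_sum (A - B)) UNIV"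
proof -
  have "(\<lambda>n. g (int n + 1) - g (int n)) sums (A - g 0)"
    unfolding sums_def using sum_lessThan_telescope[of "\<lambda>n. g (int n)"]
    by (simp add: add.commute tendsto_diff[OF tendsto_int_at_top_nat[OF top]])
  moreover have "(\<lambda>n. g (- int n) - g (- int (Suc n))) sums (g 0 - B)"
    unfolding sums_def sum_lessThan_telescope'[of "\<lambda>n. g (- int n)"]
    using tendsto_diff[OF tendsto_const tendsto_int_at_bot_nat[OF bot]] by simp
  moreover have "- int (Suc n) + 1 = - int n" for n by simp
  ultimately show ?thesis
    using has_sum_int_split[of "\<lambda>k. g (k + 1) - g k" "A - g 0" "g 0 - B"] mono by simp
qed

lemma summable_int_shift:
  fixes f :: "int \<Rightarrow> real"
  assumes "summable (\<lambda>n. f (int n))" shows "summable (\<lambda>n. f (k + int n))"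
proof (cases "0 \<le> k")
  case True
  then show ?thesis
    using assms summable_iff_shift[of "\<lambda>n. f (int n)" "nat k"] by (simp add: add.commute)
next
  case False
  then show ?thesis
    using assms summable_iff_shift[of "\<lambda>n. f (k + int n)" "nat (- k)"] by simp
qed

lemma summable_int_shift_backward:
  fixes f :: "int \<Rightarrow> real"
  assumes "summable (\<lambda>n. f (- int (Suc n)))" shows "summable (\<lambda>n. f (k - int n))"
  using summable_int_shift[of "\<lambda>j. f (- 1 - j)" "- k - 1"] assms by simp

lemma tendsto_of_increments:
  fixes f d :: "int \<Rightarrow> real"
  assumes inc: "\<And>k. f (k + 1) - f k = d k"
    and top: "(\<lambda>n. d (int n)) sums A" and bot: "(\<lambda>n. d (- int (Suc n))) sums B"
  shows "(f \<longlongrightarrow> f 0 + A) at_top" and "(f \<longlongrightarrow> f 0 - B) at_bot"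
proof -
  have "(\<Sum>n<N. d (int n)) = (\<Sum>n<N. f (int (Suc n)) - f (int n))" for N
    by (rule sum.cong) (simp_all add: inc[symmetric] add.commute)
  then have "f (int N) = f 0 + (\<Sum>n<N. d (int n))" for N
    using sum_lessThan_telescope[of "\<lambda>n. f (int n)" N] by simp
  then show "(f \<longlongrightarrow> f 0 + A) at_top"
    using top unfolding sums_def by (intro filterlim_int_of_nat_at_topD) (simp add: tendsto_add)
  have "(\<Sum>n<N. d (- int (Suc n))) = (\<Sum>n<N. f (- int n) - f (- int (Suc n)))" for N
    by (rule sum.cong) (simp_all add: inc[symmetric])
  then have "f (- int N) = f 0 - (\<Sum>n<N. d (- int (Suc n)))" for N
    using sum_lessThan_telescope'[of "\<lambda>n. f (- int n)" N] by simp
  then show "(f \<longlongrightarrow> f 0 - B) at_bot"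
    using bot unfolding sums_def filterlim_int_at_bot_iff
    by (intro filterlim_int_of_nat_at_topD) (simp add: tendsto_diff)
qed

lemma suminf_le_geometric:
  fixes f :: "nat \<Rightarrow> real"
  assumes "\<And>n. 0 \<le> f n" "summable f" "0 \<le> r" "r < 1" "\<And>n. f (Suc n) \<le> r * f n"
  shows "suminf f \<le> f 0 / (1 - r)"
proof -
  have "f n \<le> f 0 * r ^ n" for n
  proof (induction n)
    case (Suc n)
    then show ?case using assms(5)[of n] mult_left_mono[OF Suc assms(3)] by (simp add: ac_simps)
  qed simp
  then have "suminf f \<le> (\<Sum>n. f 0 * r ^ n)"
    using assms by (intro suminf_le summable_mult summable_geometric) auto
  then show ?thesis using assms(3,4) by (simp add: suminf_mult suminf_geometric divide_simps)
qed

lemma continuous_on_infsum_dominated: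
  fixes P :: "'a::topological_space \<Rightarrow> 'b \<Rightarrow> real"
  assumes cont: "\<And>k. continuous_on S (\<lambda>y. P y k)"
    and dom: "\<And>y k. y \<in> S \<Longrightarrow> norm (P y k) \<le> M k" and summable: "M summable_on UNIV"
  shows "continuous_on S (\<lambda>y. \<Sum>\<^sub>\<infinity>k. P y k)"
proof (rule uniform_limit_theorem)
  show "uniform_limit S (\<lambda>K y. \<Sum>k\<in>K. P y k) (\<lambda>y. \<Sum>\<^sub>\<infinity>k. P y k) (finite_subsets_at_top UNIV)"
    using dom summable by (intro Weierstrass_m_test_general) auto
  show "\<forall>\<^sub>F K in finite_subsets_at_top UNIV. continuous_on S (\<lambda>y. \<Sum>k\<in>K. P y k)"
    using cont by (intro always_eventually allI continuous_on_sum) auto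
qed simp

lemma image_eq_reciprocal_interval:
  fixes f :: "real \<Rightarrow> real"
  assumes "continuous_on K f" "compact K" "connected K" "K \<noteq> {}" "K \<subseteq> S" "f ` S = f ` K"
    and recip: "\<And>x. x \<in> S \<Longrightarrow> 1 / x \<in> S \<and> f (1 / x) = 1 / f x"
    and pos: "\<And>x. x \<in> S \<Longrightarrow> 0 < f x"
  shows "\<exists>lam. 0 < lam \<and> lam \<le> 1 \<and> f ` S = {lam..1 / lam}"
proof -
  obtain l u where lu: "f ` S = {l..u}"
    using connected_compact_interval_1[of "f ` K"] assms(1-3,6)
    by (metis compact_continuous_image connected_continuous_image)
  then have "l \<le> u" using assms(4,5) by (metis atLeastatMost_empty_iff2 image_is_empty subset_empty)
  then have "l \<in> f ` S" "u \<in> f ` S" using lu by auto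
  then have "0 < l" "0 < u" "1 / l \<in> f ` S" "1 / u \<in> f ` S"
    using pos recip by (force intro: image_eqI)+
  then have "1 / l \<le> u" "l \<le> 1 / u" using lu by auto
  then have "u = 1 / l" using \<open>0 < l\<close> \<open>0 < u\<close> by (simp add: field_simps)
  moreover have "l\<^sup>2 \<le> 1" using \<open>l \<le> u\<close> \<open>0 < l\<close> calculation by (simp add: field_simps power2_eq_square)
  then have "l \<le> 1" by (simp add: abs_square_le_1)
  ultimately show ?thesis using lu \<open>0 < l\<close> by blast
qed

subsection \<open>Products over the integers\<close>

lemma prodZ_minus_1 [simp]: "prodZ h (-1) = 1"
  unfolding prodZ_def by simp

lemma prodZ_pos: "(\<And>i. 0 < h i) \<Longrightarrow> 0 < prodZ h k"
  unfolding prodZ_def by (auto intro!: prod_pos)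

lemma prodZ_succ: assumes "\<And>i. h i \<noteq> 0" shows "prodZ h (k + 1) = prodZ h k * h (k + 1)"
proof -
  consider "0 \<le> k" | "k = -1" | "k = -2" | "k < -2" by linarith
  then show ?thesis
  proof cases
    case 1
    then have "{0..k + 1} = insert (k + 1) {0..k}" by auto
    with 1 show ?thesis unfolding prodZ_def by (simp add: mult.commute)
  next
    case 4
    then have "{k + 1..-1} = insert (k + 1) {k + 2..-1}" by auto
    with 4 assms show ?thesis unfolding prodZ_def by (simp add: add.assoc)
  qed (use assms in \<open>auto simp: prodZ_def\<close>)
qed

lemma prodZ_recurrence:
  fixes h u :: "int \<Rightarrow> real"
  assumes "\<And>i. h i \<noteq> 0" and rec: "\<And>k. u (k + 1) = u k * h (k + 1)"
  shows "u k = u (-1) * prodZ h k"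
proof (induction k rule: int_induct[where k = "-1"])
  case (step1 i)
  then show ?case using rec[of i] prodZ_succ[OF assms(1), where k = i] by simp
next
  case (step2 i)
  then show ?case using rec[of "i - 1"] prodZ_succ[OF assms(1), where k = "i - 1"] assms(1)[of i] by simp
qed simp

lemma prodZ_mono:
  assumes pos: "\<And>i. 0 < h i" and le: "\<And>i. h i \<le> h' i"
  shows "0 \<le> k \<Longrightarrow> prodZ h k \<le> prodZ h' k" and "k < 0 \<Longrightarrow> prodZ h' k \<le> prodZ h k"
proof -
  have "0 \<le> h i \<and> h i \<le> h' i" "0 \<le> inverse (h' i) \<and> inverse (h' i) \<le> inverse (h i)" for i
    using pos[of i] le[of i] by (auto intro: le_imp_inverse_le)
  then show "0 \<le> k \<Longrightarrow> prodZ h k \<le> prodZ h' k" "k < 0 \<Longrightarrow> prodZ h' k \<le> prodZ h k"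
    unfolding prodZ_def by (auto intro!: prod_mono)
qed

lemma isCont_prodZ:
  assumes "\<And>i. isCont (\<lambda>y. h y i) x" and "\<And>i. h x i \<noteq> 0"
  shows "isCont (\<lambda>y. prodZ (h y) k) x"
  unfolding prodZ_def using assms by (cases "0 \<le> k"; cases "k = -1") (auto intro!: continuous_intros)

lemma summable_prodZ:
  assumes pos: "\<And>i. 0 < h i" and top: "(h \<longlongrightarrow> 0) at_top" and bot: "filterlim h at_top at_bot"
  shows "summable (\<lambda>n. prodZ h (int n))" and "summable (\<lambda>n. prodZ h (- int (Suc n)))"
proof -
  have nz: "\<And>i. h i \<noteq> 0" and pp: "\<And>k. 0 < prodZ h k"
    using pos prodZ_pos[of h] by (metis less_irrefl)+
  obtain N1 where N1: "\<And>k. N1 \<le> k \<Longrightarrow> h k \<le> 1 / 2"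
    using order_tendstoD(2)[OF top, of "1 / 2"] unfolding eventually_at_top_linorder
    by (auto intro: less_imp_le)
  obtain N2 where N2: "\<And>k. k \<le> N2 \<Longrightarrow> 2 \<le> h k"
    using filterlim_at_top[THEN iffD1, OF bot, rule_format, of 2] unfolding eventually_at_bot_linorder
    by auto
  show "summable (\<lambda>n. prodZ h (int n))"
  proof (rule summable_ratio_test[where c = "1 / 2" and N = "nat N1"])
    fix n assume "nat N1 \<le> n"
    then have "prodZ h (int n + 1) \<le> prodZ h (int n) * (1 / 2)"
      using prodZ_succ[OF nz, where k = "int n"] N1[of "int n + 1"] pp[of "int n"] by simp
    then show "norm (prodZ h (int (Suc n))) \<le> 1 / 2 * norm (prodZ h (int n))"
      using pp by (simp add: abs_of_pos add.commute)
  qed simp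
  show "summable (\<lambda>n. prodZ h (- int (Suc n)))"
  proof (rule summable_ratio_test[where c = "1 / 2" and N = "nat (- N2)"])
    fix n assume "nat (- N2) \<le> n"
    then have "2 \<le> h (- int (Suc n))" by (intro N2) simp
    moreover have "prodZ h (- int (Suc n)) = prodZ h (- int (Suc (Suc n))) * h (- int (Suc n))"
      using prodZ_succ[OF nz, where k = "- int (Suc (Suc n))"] by simp
    ultimately show "norm (prodZ h (- int (Suc (Suc n)))) \<le> 1 / 2 * norm (prodZ h (- int (Suc n)))"
      using pp[of "- int (Suc (Suc n))"] by (simp add: abs_of_pos)
  qed simp
qed

section \<open>The maps \<open>s\<close>, \<open>c\<close> and \<open>d\<close>\<close>

lemma omega_gt_1: "0 < y \<Longrightarrow> 1 < omega y"
  unfolding omega_def by (simp add: real_less_rsqrt)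

lemma omega_sq: "-1/8 \<le> y \<Longrightarrow> (omega y)\<^sup>2 = 8 * y + 1"
  unfolding omega_def by simp

lemma omega_mono: "y \<le> z \<Longrightarrow> omega y \<le> omega z"
  unfolding omega_def by simp

lemma omega_strict_mono: "y < z \<Longrightarrow> omega y < omega z"
  unfolding omega_def by simp

lemma isCont_omega: "isCont omega y"
  unfolding omega_def[abs_def] by (intro continuous_intros)

text \<open>In the coordinate \<open>w = \<omega>(y)\<close> the three maps become rational functions.\<close>

definition s_of_omega :: "real \<Rightarrow> real" where "s_of_omega w = (w - 1)\<^sup>2 / (4 * (w + 7))"

definition cfac_of_omega :: "real \<Rightarrow> real" where "cfac_of_omega w = (w + 7) * (w - 1) / 16"

definition dfac_of_omega :: "real \<Rightarrow> real" where "dfac_of_omega w = (w - 1)\<^sup>2 / (8 * (w + 1))"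

lemma sfun_eq_s_of_omega: "sfun y = s_of_omega (omega y)"
  unfolding sfun_def s_of_omega_def ..

lemma cfun_eq_cfac_of_omega: "cfun y - 1 = cfac_of_omega (omega y)"
  unfolding cfun_def cfac_of_omega_def by (simp add: field_simps power2_eq_square)

lemma dfun_eq_dfac_of_omega: "0 < y \<Longrightarrow> dfun y - 1 = dfac_of_omega (omega y)"
  using omega_gt_1[of y] unfolding dfun_def dfac_of_omega_def
  by (simp add: field_simps power2_eq_square)

lemma s_of_omega_strict_mono: assumes "1 \<le> u" "u < v" shows "s_of_omega u < s_of_omega v"
proof -
  have "(v - 1)\<^sup>2 * (u + 7) - (u - 1)\<^sup>2 * (v + 7) = (v - u) * ((u - 1) * (v - 1) + 8 * (u - 1 + (v - 1)))"
    by (simp add: algebra_simps power2_eq_square)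
  moreover have "0 < (v - u) * ((u - 1) * (v - 1) + 8 * (u - 1 + (v - 1)))"
    using assms by (intro mult_pos_pos) (auto intro!: add_nonneg_pos)
  ultimately show ?thesis
    using assms unfolding s_of_omega_def by (simp add: divide_simps) (simp add: algebra_simps)
qed

lemma s_of_omega_mono: "1 \<le> u \<Longrightarrow> u \<le> v \<Longrightarrow> s_of_omega u \<le> s_of_omega v"
  using s_of_omega_strict_mono[of u v] by (cases "u = v") auto

lemma cfac_of_omega_mono: "-3 \<le> u \<Longrightarrow> u \<le> v \<Longrightarrow> cfac_of_omega u \<le> cfac_of_omega v"
proof -
  assume uv: "-3 \<le> u" "u \<le> v"
  have "(v + 7) * (v - 1) - (u + 7) * (u - 1) = (v - u) * (u + v + 6)"
    by (simp add: algebra_simps)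
  moreover have "0 \<le> (v - u) * (u + v + 6)" using uv by simp
  ultimately show ?thesis unfolding cfac_of_omega_def by (simp add: divide_right_mono)
qed

lemma dfac_of_omega_mono: "1 \<le> u \<Longrightarrow> u \<le> v \<Longrightarrow> dfac_of_omega u \<le> dfac_of_omega v"
proof -
  assume uv: "1 \<le> u" "u \<le> v"
  have "(v - 1)\<^sup>2 * (u + 1) - (u - 1)\<^sup>2 * (v + 1) = (v - u) * (u * v + u + v - 3)"
    by (simp add: algebra_simps power2_eq_square)
  moreover have "1 * 1 \<le> u * v" using uv by (intro mult_mono) auto
  then have "0 \<le> (v - u) * (u * v + u + v - 3)" using uv by simp
  ultimately show ?thesis
    using uv unfolding dfac_of_omega_def by (simp add: divide_simps) (simp add: algebra_simps)
qed

lemma omega_sfun_sq: "0 < y \<Longrightarrow> (omega (sfun y))\<^sup>2 = 8 * s_of_omega (omega y) + 1"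
proof -
  assume "0 < y"
  then have "0 \<le> s_of_omega (omega y)" using omega_gt_1[of y] by (simp add: s_of_omega_def)
  then show ?thesis unfolding sfun_eq_s_of_omega by (intro omega_sq) simp
qed

text \<open>\<open>rho t\<close> is the local central ratio of a site of a positive solution with \<open>a\<^sub>i / b\<^sub>i = t\<close>;
  in this parameter the maps become rational as well.\<close>

definition rho :: "real \<Rightarrow> real" where "rho t = (t + 2) / t\<^sup>2"

lemma rho_pos: "0 < t \<Longrightarrow> 0 < rho t"
  unfolding rho_def by simp

lemma rho_inj: assumes "0 < t" "0 < u" "rho t = rho u" shows "t = u"
proof -
  have "(t + 2) * u\<^sup>2 = (u + 2) * t\<^sup>2" using assms unfolding rho_def by (simp add: field_simps)
  then have "(u - t) * (t * u + 2 * u + 2 * t) = 0" by (simp add: algebra_simps power2_eq_square)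
  moreover have "0 < t * u + 2 * u + 2 * t" using assms by (simp add: add_pos_pos)
  ultimately show ?thesis by simp
qed

lemma omega_rho: "0 < t \<Longrightarrow> omega (rho t) = (t + 4) / t"
proof -
  assume t: "0 < t"
  have "8 * rho t + 1 = ((t + 4) / t)\<^sup>2"
    using t unfolding rho_def by (simp add: divide_simps) (simp add: algebra_simps power2_eq_square)
  then show ?thesis using t unfolding omega_def by simp
qed

lemma sfun_rho: "0 < t \<Longrightarrow> sfun (rho t) = 1 / (t * (2 * t + 1))"
  unfolding sfun_def by (simp add: omega_rho divide_simps) (simp add: algebra_simps power2_eq_square)

lemma cfun_rho: "0 < t \<Longrightarrow> cfun (rho t) - 1 = (2 * t + 1) / t\<^sup>2"
  unfolding cfun_def by (simp add: omega_rho divide_simps) (simp add: algebra_simps power2_eq_square)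

lemma dfun_rho: "0 < t \<Longrightarrow> dfun (rho t) - 1 = 1 / (t * (t + 2))"
  unfolding dfun_def by (simp add: omega_rho divide_simps) (simp add: algebra_simps power2_eq_square)

definition rho_inv :: "real \<Rightarrow> real" where "rho_inv y = 4 / (omega y - 1)"

lemma rho_inv_pos: "0 < y \<Longrightarrow> 0 < rho_inv y"
  unfolding rho_inv_def using omega_gt_1[of y] by simp

lemma rho_rho_inv: assumes "0 < y" shows "rho (rho_inv y) = y"
proof -
  have w: "1 < omega y" and y: "y = ((omega y)\<^sup>2 - 1) / 8"
    using omega_gt_1[OF assms] omega_sq[of y] assms by auto
  then show ?thesis
    unfolding rho_def rho_inv_def by (subst (3) y) (simp add: field_simps power2_eq_square)
qed

lemma rho_surj: assumes "0 < y" obtains t where "0 < t" "rho t = y"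
  using rho_inv_pos[OF assms] rho_rho_inv[OF assms] by blast

lemma recip_sfun_rho: "0 < t \<Longrightarrow> 1 / sfun (rho t) = rho (1 / t)"
  unfolding sfun_rho by (simp add: rho_def field_simps power2_eq_square)

lemma sfun_pos: "0 < y \<Longrightarrow> 0 < sfun y"
  by (metis rho_surj rho_pos sfun_rho recip_sfun_rho zero_less_divide_1_iff)

lemma sfun_le: assumes "0 < y" shows "sfun y \<le> y / 9"
proof -
  obtain t where t: "0 < t" "rho t = y" using rho_surj[OF assms] .
  have "t * (2 * t + 1) * (t + 2) - 9 * t\<^sup>2 = 2 * t * (t - 1)\<^sup>2"
    by (simp add: algebra_simps power2_eq_square)
  moreover have "0 \<le> 2 * t * (t - 1)\<^sup>2" using t(1) by simp
  ultimately have "9 * t\<^sup>2 \<le> t * (2 * t + 1) * (t + 2)" by linarith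
  then have "1 / (t * (2 * t + 1)) \<le> (t + 2) / t\<^sup>2 / 9"
    using t(1) by (simp add: divide_simps) (simp add: algebra_simps)
  then show ?thesis using t sfun_rho[OF t(1)] unfolding rho_def by simp
qed

lemma sfun_recip_sfun: assumes "0 < y" shows "sfun (1 / sfun y) = 1 / y"
proof -
  obtain t where t: "0 < t" "rho t = y" using rho_surj[OF assms] .
  have "sfun (rho (1 / t)) = 1 / ((1 / t) * (2 * (1 / t) + 1))"
    using t(1) by (intro sfun_rho) simp
  also have "\<dots> = 1 / rho t"
    using t(1) by (simp add: rho_def field_simps power2_eq_square)
  finally have "sfun (rho (1 / t)) = 1 / rho t" .
  then show ?thesis using t recip_sfun_rho[OF t(1)] by simp
qed

lemma sfun_strict_mono: "0 < y \<Longrightarrow> y < z \<Longrightarrow> sfun y < sfun z"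
  unfolding sfun_eq_s_of_omega
  using omega_gt_1 omega_strict_mono by (intro s_of_omega_strict_mono) (auto intro: less_imp_le)

lemma sfun_mono: "0 < y \<Longrightarrow> y \<le> z \<Longrightarrow> sfun y \<le> sfun z"
  using sfun_strict_mono[of y z] by (cases "y = z") auto

lemma isCont_sfun: "0 < y \<Longrightarrow> isCont sfun y"
  unfolding sfun_def[abs_def] using omega_gt_1[of y]
  by (intro continuous_intros isCont_omega) auto

lemma sfun_10: "sfun 10 = 1"
proof -
  have "omega 10 = 9" unfolding omega_def by simp
  then show ?thesis unfolding sfun_def by simp
qed

lemma sfun_inv_pos: "0 < y \<Longrightarrow> 0 < sfun_inv y"
  unfolding sfun_inv_def by (simp add: sfun_pos)

lemma sfun_inv_sfun: "0 < y \<Longrightarrow> sfun_inv (sfun y) = y"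
  unfolding sfun_inv_def by (simp add: sfun_recip_sfun)

lemma sfun_sfun_inv: "0 < y \<Longrightarrow> sfun (sfun_inv y) = y"
  unfolding sfun_inv_def using sfun_recip_sfun[of "1 / y"] by simp

lemma sfun_inv_strict_mono: assumes "0 < y" "y < z" shows "sfun_inv y < sfun_inv z"
proof (rule ccontr)
  assume "\<not> sfun_inv y < sfun_inv z"
  then have "sfun (sfun_inv z) \<le> sfun (sfun_inv y)"
    using assms by (intro sfun_mono sfun_inv_pos) auto
  then show False using assms by (simp add: sfun_sfun_inv)
qed

lemma sfun_inv_mono: "0 < y \<Longrightarrow> y \<le> z \<Longrightarrow> sfun_inv y \<le> sfun_inv z"
  using sfun_inv_strict_mono[of y z] by (cases "y = z") auto

lemma sfun_inv_ge: "0 < y \<Longrightarrow> 9 * y \<le> sfun_inv y"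
  using sfun_le[of "sfun_inv y"] sfun_sfun_inv[of y] sfun_inv_pos[of y] by simp

lemma isCont_sfun_inv: assumes "0 < y" shows "isCont sfun_inv y"
proof -
  have "isCont (\<lambda>z. sfun (1 / z)) y"
    using assms by (intro continuous_at_compose[OF _ isCont_sfun, unfolded o_def] continuous_intros) auto
  then show ?thesis
    unfolding sfun_inv_def[abs_def] using assms sfun_pos[of "1 / y"] by (intro continuous_intros) auto
qed

lemma cfun_gt_1: assumes "0 < y" shows "1 < cfun y"
proof -
  obtain t where t: "0 < t" "rho t = y" using rho_surj[OF assms] .
  then have "0 < (2 * t + 1) / t\<^sup>2" by simp
  then show ?thesis using cfun_rho[OF t(1)] unfolding t(2) by linarith
qed

lemma dfun_gt_1: assumes "0 < y" shows "1 < dfun y"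
proof -
  obtain t where t: "0 < t" "rho t = y" using rho_surj[OF assms] .
  have "0 < 1 / (t * (t + 2))" using t(1) by simp
  then show ?thesis using dfun_rho[OF t(1)] unfolding t(2) by linarith
qed

lemma cfun_mono: "0 < y \<Longrightarrow> y \<le> z \<Longrightarrow> cfun y \<le> cfun z"
  using cfac_of_omega_mono[of "omega y" "omega z"] omega_gt_1[of y] omega_mono[of y z]
  by (simp add: cfun_eq_cfac_of_omega[symmetric])

lemma dfun_mono: "0 < y \<Longrightarrow> y \<le> z \<Longrightarrow> dfun y \<le> dfun z"
  using dfac_of_omega_mono[of "omega y" "omega z"] omega_gt_1[of y] omega_mono[of y z]
  by (simp add: dfun_eq_dfac_of_omega[symmetric])

lemma isCont_cfun: "isCont cfun y"
  unfolding cfun_def[abs_def] by (intro continuous_intros isCont_omega) simp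

lemma isCont_dfun: "0 < y \<Longrightarrow> isCont dfun y"
  unfolding dfun_def[abs_def] using omega_gt_1[of y]
  by (intro continuous_intros isCont_omega) auto

lemma cfun_tendsto_at_0: "(cfun \<longlongrightarrow> 1) (at_right 0)"
  unfolding cfun_def[abs_def] omega_def by real_asymp

lemma dfun_tendsto_at_0: "(dfun \<longlongrightarrow> 1) (at_right 0)"
  unfolding dfun_def[abs_def] omega_def by real_asymp

lemma cfun_tendsto_at_top: "filterlim cfun at_top at_top"
  unfolding cfun_def[abs_def] omega_def by real_asymp

lemma dfun_tendsto_at_top: "filterlim dfun at_top at_top"
  unfolding dfun_def[abs_def] omega_def by real_asymp

section \<open>The orbit \<open>s\<^sub>j(x)\<close>\<close>

lemma s_iter_0 [simp]: "s_iter 0 x = x"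
  unfolding s_iter_def by simp

lemma s_iter_pos: "0 < x \<Longrightarrow> 0 < s_iter j x"
proof -
  assume x: "0 < x"
  have "0 < (sfun ^^ n) x" "0 < (sfun_inv ^^ n) x" for n
    by (induction n) (use x in \<open>auto simp: sfun_pos sfun_inv_pos\<close>)
  then show ?thesis unfolding s_iter_def by simp
qed

lemma s_iter_succ: assumes "0 < x" shows "s_iter (j + 1) x = sfun (s_iter j x)"
proof -
  consider "0 \<le> j" | "j = -1" | "j < -1" by linarith
  then show ?thesis
  proof cases
    case 1
    then have "nat (j + 1) = Suc (nat j)" by simp
    with 1 show ?thesis unfolding s_iter_def by simp
  next
    case 2
    then show ?thesis unfolding s_iter_def using sfun_sfun_inv[OF assms] by simp
  next
    case 3
    then have "nat (- j) = Suc (nat (- (j + 1)))" by simp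
    moreover have "0 < s_iter (j + 1) x" by (rule s_iter_pos[OF assms])
    ultimately show ?thesis using 3 unfolding s_iter_def by (simp add: sfun_sfun_inv)
  qed
qed

lemma s_iter_pred: "0 < x \<Longrightarrow> s_iter (j - 1) x = sfun_inv (s_iter j x)"
  using s_iter_succ[of x "j - 1"] sfun_inv_sfun[OF s_iter_pos, of x "j - 1"] by simp

lemma s_iter_mono: assumes "0 < x" "x \<le> x'" shows "s_iter j x \<le> s_iter j x'"
proof (induction j rule: int_induct[where k = 0])
  case (step1 i)
  then show ?case
    using assms s_iter_pos[OF assms(1), of i] by (simp add: s_iter_succ sfun_mono)
next
  case (step2 i)
  then show ?case
    using assms s_iter_pos[OF assms(1), of i] by (simp add: s_iter_pred sfun_inv_mono)
qed (use assms in simp)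

lemma s_iter_antimono: assumes "0 < x" "j \<le> j'" shows "s_iter j' x \<le> s_iter j x"
proof -
  have "s_iter (j + int n) x \<le> s_iter j x" for n
  proof (induction n)
    case (Suc n)
    have "s_iter (j + int (Suc n)) x = sfun (s_iter (j + int n) x)"
      using s_iter_succ[OF assms(1), of "j + int n"] by (simp add: ac_simps)
    also have "\<dots> \<le> s_iter (j + int n) x"
      using sfun_le[OF s_iter_pos[OF assms(1)], of "j + int n"] s_iter_pos[OF assms(1), of "j + int n"]
      by linarith
    finally show ?case using Suc by simp
  qed simp
  from this[of "nat (j' - j)"] show ?thesis using assms by simp
qed

lemma isCont_s_iter: assumes "0 < x" shows "isCont (s_iter j) x"
proof (induction j rule: int_induct[where k = 0])
  case base
  then show ?case by (simp add: s_iter_def[abs_def])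
next
  case (step1 i)
  have "\<forall>\<^sub>F y in nhds x. sfun (s_iter i y) = s_iter (i + 1) y"
    using eventually_nhds_in_open[of "{0<..}" x] assms
    by (auto elim!: eventually_mono simp: s_iter_succ)
  moreover have "isCont (\<lambda>y. sfun (s_iter i y)) x"
    using continuous_at_compose[OF step1(2) isCont_sfun[OF s_iter_pos[OF assms]]] by (simp add: o_def)
  ultimately show ?case by (simp add: isCont_cong)
next
  case (step2 i)
  have "\<forall>\<^sub>F y in nhds x. sfun_inv (s_iter i y) = s_iter (i - 1) y"
    using eventually_nhds_in_open[of "{0<..}" x] assms
    by (auto elim!: eventually_mono simp: s_iter_pred)
  moreover have "isCont (\<lambda>y. sfun_inv (s_iter i y)) x"
    using continuous_at_compose[OF step2(2) isCont_sfun_inv[OF s_iter_pos[OF assms]]] by (simp add: o_def)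
  ultimately show ?case by (simp add: isCont_cong)
qed

lemma s_iter_nat_le: assumes "0 < x" shows "s_iter (int n) x \<le> x / 9 ^ n"
proof (induction n)
  case (Suc n)
  have "s_iter (int (Suc n)) x = sfun (s_iter (int n) x)" using s_iter_succ[OF assms, of "int n"] by (simp add: add.commute)
  also have "\<dots> \<le> s_iter (int n) x / 9" by (rule sfun_le[OF s_iter_pos[OF assms]])
  also have "\<dots> \<le> x / 9 ^ Suc n" using Suc by simp
  finally show ?case .
qed simp

lemma s_iter_neg_ge: assumes "0 < x" shows "9 ^ n * x \<le> s_iter (- int n) x"
proof (induction n)
  case (Suc n)
  have "9 ^ Suc n * x \<le> 9 * s_iter (- int n) x" using Suc by simp
  also have "\<dots> \<le> sfun_inv (s_iter (- int n) x)" by (rule sfun_inv_ge[OF s_iter_pos[OF assms]])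
  also have "\<dots> = s_iter (- int n - 1) x" using s_iter_pred[OF assms, of "- int n"] by simp
  also have "- int n - 1 = - int (Suc n)" by simp
  finally show ?case .
qed simp

lemma s_iter_tendsto_0: assumes "0 < x" shows "((\<lambda>k. s_iter k x) \<longlongrightarrow> 0) at_top"
proof (rule filterlim_int_of_nat_at_topD, rule tendsto_sandwich)
  show "\<forall>\<^sub>F n in sequentially. 0 \<le> s_iter (int n) x"
    using s_iter_pos[OF assms] by (simp add: less_imp_le)
  show "\<forall>\<^sub>F n in sequentially. s_iter (int n) x \<le> x / 9 ^ n"
    using s_iter_nat_le[OF assms] by simp
  show "(\<lambda>n. x / 9 ^ n) \<longlonglongrightarrow> 0" by real_asymp
qed simp

lemma s_iter_tendsto_at_bot: assumes "0 < x" shows "filterlim (\<lambda>k. s_iter k x) at_top at_bot"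
  unfolding filterlim_int_at_bot_iff
proof (rule filterlim_int_of_nat_at_topD, rule filterlim_at_top_mono)
  show "filterlim (\<lambda>n. 9 ^ n * x) at_top sequentially" using assms by real_asymp
  show "\<forall>\<^sub>F n in sequentially. 9 ^ n * x \<le> s_iter (- int n) x"
    using s_iter_neg_ge[OF assms] by simp
qed

lemma s_iter_in_1_10: assumes "0 < x" obtains k where "s_iter k x \<in> {1..10}"
proof -
  have "eventually (\<lambda>k. 1 \<le> s_iter k x) at_bot"
    using s_iter_tendsto_at_bot[OF assms] by (simp add: filterlim_at_top)
  then obtain k\<^sub>0 where "1 \<le> s_iter k\<^sub>0 x" unfolding eventually_at_bot_linorder by auto
  moreover have "eventually (\<lambda>k. \<not> 1 \<le> s_iter k x) at_top"
    using order_tendstoD(2)[OF s_iter_tendsto_0[OF assms], of 1] by (simp add: not_le)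
  ultimately obtain k where k: "1 \<le> s_iter k x" "s_iter (k + 1) x < 1"
    using ex_last_step[of "\<lambda>k. 1 \<le> s_iter k x"] by (auto simp: not_le)
  have "s_iter k x \<le> 10"
  proof (rule ccontr)
    assume "\<not> s_iter k x \<le> 10"
    then have "sfun 10 \<le> sfun (s_iter k x)" by (intro sfun_mono) auto
    then show False using k(2) by (simp add: sfun_10 s_iter_succ[OF assms])
  qed
  with k(1) show ?thesis using that by auto
qed

section \<open>Products and sums along the orbit\<close>

definition orbit_prod :: "(real \<Rightarrow> real) \<Rightarrow> real \<Rightarrow> int \<Rightarrow> real" where
  "orbit_prod g x = prodZ (\<lambda>i. g (s_iter i x) - 1)"

definition orbit_sum :: "(real \<Rightarrow> real) \<Rightarrow> real \<Rightarrow> real" where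
  "orbit_sum g x = (\<Sum>\<^sub>\<infinity>k. orbit_prod g x k)"

lemma orbit_prod_minus_1 [simp]: "orbit_prod g x (-1) = 1"
  unfolding orbit_prod_def by simp

locale orbit_weight =
  fixes g :: "real \<Rightarrow> real"
  assumes gt_1: "\<And>y. 0 < y \<Longrightarrow> 1 < g y"
    and monotone: "\<And>y z. 0 < y \<Longrightarrow> y \<le> z \<Longrightarrow> g y \<le> g z"
    and continuous: "\<And>y. 0 < y \<Longrightarrow> isCont g y"
    and tendsto_at_0: "(g \<longlongrightarrow> 1) (at_right 0)"
    and tendsto_at_top: "filterlim g at_top at_top"
begin

lemma factor_pos: "0 < x \<Longrightarrow> 0 < g (s_iter i x) - 1"
  using gt_1[OF s_iter_pos] by simp

lemma orbit_prod_pos: "0 < x \<Longrightarrow> 0 < orbit_prod g x k"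
  unfolding orbit_prod_def using factor_pos by (intro prodZ_pos)

lemma orbit_prod_succ:
  assumes "0 < x" shows "orbit_prod g x (k + 1) = orbit_prod g x k * (g (s_iter (k + 1) x) - 1)"
proof -
  have "g (s_iter i x) - 1 \<noteq> 0" for i using factor_pos[OF assms, of i] by simp
  then show ?thesis unfolding orbit_prod_def by (rule prodZ_succ)
qed

lemma summable_orbit_prod:
  assumes "0 < x"
  shows "summable (\<lambda>n. orbit_prod g x (int n))" and "summable (\<lambda>n. orbit_prod g x (- int (Suc n)))"
proof -
  have "filterlim (\<lambda>k. s_iter k x) (at_right 0) at_top"
    using s_iter_pos[OF assms] by (intro tendsto_imp_filterlim_at_right s_iter_tendsto_0 assms) auto
  then have "((\<lambda>k. g (s_iter k x)) \<longlongrightarrow> 1) at_top" by (rule filterlim_compose[OF tendsto_at_0])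
  then have "((\<lambda>k. g (s_iter k x) - 1) \<longlongrightarrow> 0) at_top"
    using tendsto_diff[OF _ tendsto_const[of 1]] by fastforce
  moreover have "filterlim (\<lambda>k. g (s_iter k x)) at_top at_bot"
    by (rule filterlim_compose[OF tendsto_at_top s_iter_tendsto_at_bot[OF assms]])
  then have "filterlim (\<lambda>k. - 1 + g (s_iter k x)) at_top at_bot"
    by (rule filterlim_tendsto_add_at_top[OF tendsto_const])
  ultimately show "summable (\<lambda>n. orbit_prod g x (int n))" "summable (\<lambda>n. orbit_prod g x (- int (Suc n)))"
    unfolding orbit_prod_def using factor_pos[OF assms] by (intro summable_prodZ; simp)+
qed

lemma has_sum_orbit_prod:
  "0 < x \<Longrightarrow> (orbit_prod g x has_sum ((\<Sum>n. orbit_prod g x (int n)) + (\<Sum>n. orbit_prod g x (- int (Suc n))))) UNIV"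
  using summable_orbit_prod orbit_prod_pos
  by (intro has_sum_int_split summable_sums) (auto intro: less_imp_le)

lemma summable_on_orbit_prod: "0 < x \<Longrightarrow> orbit_prod g x summable_on UNIV"
  using has_sum_orbit_prod by (auto simp: summable_on_def)

lemma orbit_sum_eq:
  "0 < x \<Longrightarrow> orbit_sum g x = (\<Sum>n. orbit_prod g x (int n)) + (\<Sum>n. orbit_prod g x (- int (Suc n)))"
  unfolding orbit_sum_def using has_sum_orbit_prod by (rule infsumI)

lemma orbit_sum_pos: "0 < x \<Longrightarrow> 0 < orbit_sum g x"
  using summable_orbit_prod orbit_prod_pos
  by (simp add: orbit_sum_eq add_pos_pos suminf_pos)

lemma orbit_prod_mono:
  assumes "0 < x" "x \<le> x'"
  shows "0 \<le> k \<Longrightarrow> orbit_prod g x k \<le> orbit_prod g x' k"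
    and "k < 0 \<Longrightarrow> orbit_prod g x' k \<le> orbit_prod g x k"
  using prodZ_mono[of "\<lambda>i. g (s_iter i x) - 1" "\<lambda>i. g (s_iter i x') - 1"]
    factor_pos[OF assms(1)] monotone[OF s_iter_pos[OF assms(1)] s_iter_mono[OF assms]]
  unfolding orbit_prod_def by auto

lemma suminf_orbit_prod_tail_pos_le:
  assumes x: "0 < x" and q: "g (s_iter (int N + 1) x) - 1 \<le> q" "q < 1"
  shows "(\<Sum>n. orbit_prod g x (int (n + N))) \<le> orbit_prod g x (int N) / (1 - q)"
proof -
  have "(\<Sum>n. orbit_prod g x (int (n + N))) \<le> orbit_prod g x (int (0 + N)) / (1 - q)"
  proof (rule suminf_le_geometric)
    show "summable (\<lambda>n. orbit_prod g x (int (n + N)))"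
      using summable_int_shift[OF summable_orbit_prod(1)[OF x], of "int N"] by (simp add: add.commute)
    show "0 \<le> q" using factor_pos[OF x, of "int N + 1"] q(1) by simp
    show "orbit_prod g x (int (Suc n + N)) \<le> q * orbit_prod g x (int (n + N))" for n
    proof -
      have "g (s_iter (int (n + N) + 1) x) \<le> g (s_iter (int N + 1) x)"
        by (intro monotone s_iter_pos x s_iter_antimono) simp
      then show ?thesis
        using orbit_prod_succ[OF x, of "int (n + N)"] orbit_prod_pos[OF x, of "int (n + N)"] q(1)
        by (simp add: mult_left_mono ac_simps)
    qed
  qed (use q orbit_prod_pos[OF x] in \<open>auto intro: less_imp_le\<close>)
  then show ?thesis by simp
qed

lemma suminf_orbit_prod_tail_neg_le:
  assumes x: "0 < x" and M: "M \<le> g (s_iter (- int (Suc N)) x) - 1" "1 < M"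
  shows "(\<Sum>n. orbit_prod g x (- int (Suc (n + N)))) \<le> orbit_prod g x (- int (Suc N)) / (1 - 1 / M)"
proof -
  have "(\<Sum>n. orbit_prod g x (- int (Suc (n + N)))) \<le> orbit_prod g x (- int (Suc (0 + N))) / (1 - 1 / M)"
  proof (rule suminf_le_geometric)
    have "(\<lambda>n. orbit_prod g x (- int (Suc (n + N)))) = (\<lambda>n. orbit_prod g x (- int (Suc N) - int n))"
      by (simp add: algebra_simps)
    then show "summable (\<lambda>n. orbit_prod g x (- int (Suc (n + N))))"
      using summable_int_shift_backward[OF summable_orbit_prod(2)[OF x]] by metis
    show "orbit_prod g x (- int (Suc (Suc n + N))) \<le> 1 / M * orbit_prod g x (- int (Suc (n + N)))" for n
    proof -
      define k where "k = - int (Suc (n + N))"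
      have "g (s_iter (- int (Suc N)) x) \<le> g (s_iter k x)"
        unfolding k_def by (intro monotone s_iter_pos x s_iter_antimono) simp
      then have "M \<le> g (s_iter k x) - 1" using M(1) by simp
      moreover have "orbit_prod g x k = orbit_prod g x (k - 1) * (g (s_iter k x) - 1)"
        using orbit_prod_succ[OF x, of "k - 1"] by simp
      moreover have "- int (Suc (Suc n + N)) = k - 1" by (simp add: k_def)
      ultimately show ?thesis
        using M(2) orbit_prod_pos[OF x, of "k - 1"] factor_pos[OF x, of k]
        by (simp add: k_def[symmetric] divide_simps mult_left_mono)
    qed
  qed (use M orbit_prod_pos[OF x] in \<open>auto intro: less_imp_le\<close>)
  then show ?thesis by simp
qed

lemma isCont_orbit_prod: assumes "0 < x" shows "isCont (\<lambda>y. orbit_prod g y k) x"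
proof -
  have "g (s_iter i x) - 1 \<noteq> 0" for i using factor_pos[OF assms, of i] by simp
  then show ?thesis
    unfolding orbit_prod_def using assms
    by (intro isCont_prodZ continuous_intros continuous_at_compose[OF isCont_s_iter continuous,
          unfolded o_def] s_iter_pos)
qed

lemma continuous_on_orbit_sum: "continuous_on {0<..} (orbit_sum g)"
proof (intro continuous_at_imp_continuous_on ballI)
  fix x :: real assume "x \<in> {0<..}"
  then have x: "0 < x" by simp
  let ?S = "{x / 2..2 * x}"
  have "continuous_on ?S (orbit_sum g)"
    unfolding orbit_sum_def
  proof (rule continuous_on_infsum_dominated)
    show "continuous_on ?S (\<lambda>y. orbit_prod g y k)" for k
      using x by (intro continuous_at_imp_continuous_on ballI isCont_orbit_prod) auto
    show "norm (orbit_prod g y k) \<le> orbit_prod g (x / 2) k + orbit_prod g (2 * x) k" if "y \<in> ?S" for y k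
      using that x orbit_prod_mono[of "x / 2" y k] orbit_prod_mono[of y "2 * x" k]
        orbit_prod_pos[of "x / 2" k] orbit_prod_pos[of y k] orbit_prod_pos[of "2 * x" k]
      by (cases "0 \<le> k") auto
    show "(\<lambda>k. orbit_prod g (x / 2) k + orbit_prod g (2 * x) k) summable_on UNIV"
      using x by (intro summable_on_add summable_on_orbit_prod) auto
  qed
  moreover have "x \<in> interior ?S" using x by simp
  ultimately show "isCont (orbit_sum g) x" by (rule continuous_on_interior)
qed

end

interpretation c_weight: orbit_weight cfun
  using cfun_gt_1 cfun_mono isCont_cfun cfun_tendsto_at_0 cfun_tendsto_at_top by unfold_locales

interpretation d_weight: orbit_weight dfun
  using dfun_gt_1 dfun_mono isCont_dfun dfun_tendsto_at_0 dfun_tendsto_at_top by unfold_locales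

section \<open>Positive solutions\<close>

lemma abmn_equations_iff:
  fixes a b m mp mm :: real
  assumes ab: "0 < a" "0 < b"
  shows "((a + b) * (m + a) = a * mp + b * mm \<and> (a + b)\<^sup>2 = b * (mp - mm))
    \<longleftrightarrow> (mp - m = 2 * a + b \<and> m - mm = a\<^sup>2 / b)"
proof
  assume eq: "(a + b) * (m + a) = a * mp + b * mm \<and> (a + b)\<^sup>2 = b * (mp - mm)"
  have "(a + b) * (mp - (m + 2 * a + b))
      = (a * mp + b * mm - (a + b) * (m + a)) + (b * (mp - mm) - (a + b)\<^sup>2)"
    by (simp add: algebra_simps power2_eq_square)
  then have "(a + b) * (mp - (m + 2 * a + b)) = 0" using eq by linarith
  then have up: "mp - m = 2 * a + b" using ab by simp
  have "b * (m - mm) = b * (mp - mm) - b * (mp - m)" by (simp add: algebra_simps)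
  also have "\<dots> = a\<^sup>2" using eq[THEN conjunct2] up by (simp add: algebra_simps power2_eq_square)
  finally show "mp - m = 2 * a + b \<and> m - mm = a\<^sup>2 / b" using up ab by (simp add: field_simps)
next
  assume diffs: "mp - m = 2 * a + b \<and> m - mm = a\<^sup>2 / b"
  then have mp: "mp = m + 2 * a + b" by simp
  have mm: "b * mm = b * m - a\<^sup>2" using diffs ab by (simp add: field_simps)
  have "(a + b) * (m + a) = a * (m + 2 * a + b) + (b * m - a\<^sup>2)"
    by (simp add: algebra_simps power2_eq_square)
  moreover have "(a + b)\<^sup>2 = b * (m + 2 * a + b) - (b * m - a\<^sup>2)"
    by (simp add: algebra_simps power2_eq_square)
  ultimately show "(a + b) * (m + a) = a * mp + b * mm \<and> (a + b)\<^sup>2 = b * (mp - mm)"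
    unfolding mp right_diff_distrib mm by simp
qed

lemma abmn_positive_iff:
  "abmn_positive a b m n \<longleftrightarrow> (\<forall>i. 0 < a i \<and> 0 < b i
     \<and> m (i + 1) - m i = 2 * a i + b i \<and> m i - m (i - 1) = (a i)\<^sup>2 / b i
     \<and> n (i - 1) - n i = a i + 2 * b i \<and> n i - n (i + 1) = (b i)\<^sup>2 / a i)"
proof -
  have m_iff: "((a i + b i) * (m i + a i) = a i * m (i + 1) + b i * m (i - 1)
        \<and> (a i + b i)\<^sup>2 = b i * (m (i + 1) - m (i - 1)))
      \<longleftrightarrow> (m (i + 1) - m i = 2 * a i + b i \<and> m i - m (i - 1) = (a i)\<^sup>2 / b i)"
    if "0 < a i" "0 < b i" for i
    using abmn_equations_iff[OF that] .
  \<comment> \<open>the \<open>n\<close>-equations are the \<open>m\<close>-equations with \<open>a, b\<close> exchanged and \<open>i\<close> reversed\<close>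
  have n_iff: "((a i + b i) * (n i + b i) = a i * n (i + 1) + b i * n (i - 1)
        \<and> (a i + b i)\<^sup>2 = a i * (n (i - 1) - n (i + 1)))
      \<longleftrightarrow> (n (i - 1) - n i = a i + 2 * b i \<and> n i - n (i + 1) = (b i)\<^sup>2 / a i)"
    if "0 < a i" "0 < b i" for i
    using abmn_equations_iff[OF that(2,1), of "n i" "n (i - 1)" "n (i + 1)"]
    unfolding add.commute[of "b i" "a i"] add.commute[of "b i * n (i - 1)"] add.commute[of "2 * b i"] .
  show ?thesis
    unfolding abmn_positive_def abmn_def using m_iff n_iff by (fastforce intro: less_imp_le)
qed

definition local_ratio :: "zseq \<Rightarrow> zseq \<Rightarrow> int \<Rightarrow> real" where
  "local_ratio m n i = (n (i - 1) - n i) / (m i - m (i - 1))"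

lemma central_ratio_eq_local_ratio: "central_ratio m n = local_ratio m n 0"
  unfolding central_ratio_def local_ratio_def by simp

definition margin_fun :: "real \<Rightarrow> real" where
  "margin_fun x = inverse (orbit_sum cfun x) * x * orbit_sum dfun x"

locale positive_solution =
  fixes a b m n :: zseq
  assumes positive: "abmn_positive a b m n"
begin

lemma a_pos: "0 < a i" and b_pos: "0 < b i"
  and m_diff_up: "m (i + 1) - m i = 2 * a i + b i" and m_diff_down: "m i - m (i - 1) = (a i)\<^sup>2 / b i"
  and n_diff_down: "n (i - 1) - n i = a i + 2 * b i" and n_diff_up: "n i - n (i + 1) = (b i)\<^sup>2 / a i"
  using positive unfolding abmn_positive_iff by auto

lemma local_ratio_eq_rho: "local_ratio m n i = rho (a i / b i)"
  using a_pos[of i] b_pos[of i] unfolding local_ratio_def n_diff_down m_diff_down rho_def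
  by (simp add: field_simps power2_eq_square)

lemma local_ratio_pos: "0 < local_ratio m n i"
  using a_pos[of i] b_pos[of i] by (simp add: local_ratio_eq_rho rho_pos)

lemma local_ratio_succ: "local_ratio m n (i + 1) = sfun (local_ratio m n i)"
proof -
  have "local_ratio m n (i + 1) = (b i)\<^sup>2 / a i / (2 * a i + b i)"
    unfolding local_ratio_def using n_diff_up[of i] m_diff_up[of i] by simp
  also have "\<dots> = sfun (rho (a i / b i))"
    using a_pos[of i] b_pos[of i] by (simp add: sfun_rho field_simps power2_eq_square)
  finally show ?thesis by (simp add: local_ratio_eq_rho)
qed

lemma central_ratio_pos: "0 < central_ratio m n"
  using local_ratio_pos[of 0] by (simp add: central_ratio_eq_local_ratio)

lemma local_ratio_eq_s_iter: "local_ratio m n i = s_iter i (central_ratio m n)"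
proof (induction i rule: int_induct[where k = 0])
  case (step1 i)
  then show ?case using central_ratio_pos by (simp add: local_ratio_succ s_iter_succ)
next
  case (step2 i)
  have "s_iter (i - 1) (central_ratio m n) = sfun_inv (local_ratio m n i)"
    using s_iter_pred[OF central_ratio_pos] step2(2) by simp
  also have "\<dots> = local_ratio m n (i - 1)"
    using local_ratio_succ[of "i - 1"] sfun_inv_sfun[OF local_ratio_pos] by simp
  finally show ?case by simp
qed (simp add: central_ratio_eq_local_ratio)

lemma m_increment_ratio: "m (i + 1) - m i = (m i - m (i - 1)) * (cfun (local_ratio m n i) - 1)"
proof -
  have "cfun (local_ratio m n i) - 1 = (2 * a i + b i) * b i / (a i)\<^sup>2"
    using a_pos[of i] b_pos[of i] by (simp add: local_ratio_eq_rho cfun_rho field_simps power2_eq_square)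
  then show ?thesis
    using a_pos[of i] b_pos[of i] by (simp add: m_diff_up m_diff_down power2_eq_square)
qed

lemma n_increment_ratio: "n i - n (i + 1) = (n (i - 1) - n i) * (dfun (local_ratio m n i) - 1)"
proof -
  have "dfun (local_ratio m n i) - 1 = (b i)\<^sup>2 / (a i * (a i + 2 * b i))"
    using a_pos[of i] b_pos[of i] by (simp add: local_ratio_eq_rho dfun_rho field_simps power2_eq_square)
  then show ?thesis
    using a_pos[of i] b_pos[of i] by (simp add: n_diff_up n_diff_down)
qed

lemma m_increment: "m (k + 1) - m k = (m 0 - m (-1)) * orbit_prod cfun (central_ratio m n) k"
proof -
  let ?h = "\<lambda>i. cfun (s_iter i (central_ratio m n)) - 1"
  have "?h i \<noteq> 0" for i
    using cfun_gt_1[OF s_iter_pos[OF central_ratio_pos]] by (simp add: less_imp_neq[symmetric])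
  moreover have "m (k + 1 + 1) - m (k + 1) = (m (k + 1) - m k) * ?h (k + 1)" for k
    using m_increment_ratio[of "k + 1"] by (simp add: local_ratio_eq_s_iter)
  ultimately show ?thesis
    unfolding orbit_prod_def using prodZ_recurrence[of ?h "\<lambda>k. m (k + 1) - m k"] by simp
qed

lemma n_increment: "n k - n (k + 1) = (n (-1) - n 0) * orbit_prod dfun (central_ratio m n) k"
proof -
  let ?h = "\<lambda>i. dfun (s_iter i (central_ratio m n)) - 1"
  have "?h i \<noteq> 0" for i
    using dfun_gt_1[OF s_iter_pos[OF central_ratio_pos]] by (simp add: less_imp_neq[symmetric])
  moreover have "n (k + 1) - n (k + 1 + 1) = (n k - n (k + 1)) * ?h (k + 1)" for k
    using n_increment_ratio[of "k + 1"] by (simp add: local_ratio_eq_s_iter)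
  ultimately show ?thesis
    unfolding orbit_prod_def using prodZ_recurrence[of ?h "\<lambda>k. n k - n (k + 1)"] by simp
qed

lemma has_sum_orbit_prod_cfun:
  assumes "(m \<longlongrightarrow> mtop) at_top" "(m \<longlongrightarrow> mbot) at_bot"
  shows "(orbit_prod cfun (central_ratio m n) has_sum (mtop - mbot) / (m 0 - m (-1))) UNIV"
proof -
  have "0 < m 0 - m (-1)" using m_diff_down[of 0] a_pos[of 0] b_pos[of 0] by simp
  moreover have "m k \<le> m (k + 1)" for k using m_diff_up[of k] a_pos[of k] b_pos[of k] by simp
  then have "((\<lambda>k. (m 0 - m (-1)) * orbit_prod cfun (central_ratio m n) k) has_sum (mtop - mbot)) UNIV"
    using has_sum_increments[of m, OF _ assms] by (simp add: m_increment)
  ultimately show ?thesis by (simp add: has_sum_cmult_right_iff)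
qed

lemma has_sum_orbit_prod_dfun:
  assumes "(n \<longlongrightarrow> ntop) at_top" "(n \<longlongrightarrow> nbot) at_bot"
  shows "(orbit_prod dfun (central_ratio m n) has_sum (nbot - ntop) / (n (-1) - n 0)) UNIV"
proof -
  have "0 < n (-1) - n 0" using n_diff_down[of 0] a_pos[of 0] b_pos[of 0] by simp
  moreover have "- n k \<le> - n (k + 1)" for k
  proof -
    have "0 \<le> (b k)\<^sup>2 / a k" using a_pos[of k] by simp
    then show ?thesis using n_diff_up[of k] by linarith
  qed
  then have "((\<lambda>k. (n (-1) - n 0) * orbit_prod dfun (central_ratio m n) k) has_sum (nbot - ntop)) UNIV"
    using has_sum_increments[of "\<lambda>k. - n k", OF _ tendsto_minus[OF assms(1)] tendsto_minus[OF assms(2)]]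
    by (simp add: n_increment[symmetric])
  ultimately show ?thesis by (simp add: has_sum_cmult_right_iff)
qed

lemma mina_margin_eq_margin_fun:
  assumes "has_limits m n"
  shows "mina_margin m n = margin_fun (central_ratio m n)"
proof -
  obtain mtop mbot ntop nbot where lim: "(m \<longlongrightarrow> mtop) at_top" "(m \<longlongrightarrow> mbot) at_bot"
      "(n \<longlongrightarrow> ntop) at_top" "(n \<longlongrightarrow> nbot) at_bot"
    using assms unfolding has_limits_def by blast
  define \<mu> \<nu> where "\<mu> = m 0 - m (-1)" and "\<nu> = n (-1) - n 0"
  have pos: "0 < \<mu>" "0 < \<nu>"
    unfolding \<mu>_def \<nu>_def using m_diff_down[of 0] n_diff_down[of 0] a_pos[of 0] b_pos[of 0] by auto
  have c: "orbit_sum cfun (central_ratio m n) = (mtop - mbot) / \<mu>"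
    and d: "orbit_sum dfun (central_ratio m n) = (nbot - ntop) / \<nu>"
    unfolding orbit_sum_def \<mu>_def \<nu>_def
    using has_sum_orbit_prod_cfun[OF lim(1,2)] has_sum_orbit_prod_dfun[OF lim(3,4)]
    by (auto intro: infsumI)
  have "margin_fun (central_ratio m n) = inverse ((mtop - mbot) / \<mu>) * (\<nu> / \<mu>) * ((nbot - ntop) / \<nu>)"
    unfolding margin_fun_def c d by (simp add: central_ratio_def \<mu>_def \<nu>_def)
  also have "\<dots> = (nbot - ntop) / (mtop - mbot)"
    using pos by (cases "mtop = mbot") (simp_all add: field_simps)
  also have "\<dots> = mina_margin m n"
    unfolding mina_margin_def lim_top_def lim_bot_def using lim by (simp add: tendsto_Lim)
  finally show ?thesis ..
qed

lemma shift: "positive_solution (\<lambda>i. a (i + 1)) (\<lambda>i. b (i + 1)) (\<lambda>i. m (i + 1)) (\<lambda>i. n (i + 1))"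
  unfolding positive_solution_def abmn_positive_iff
proof (intro allI conjI)
  fix i
  show "0 < a (i + 1)" "0 < b (i + 1)" by (rule a_pos b_pos)+
  show "m (i + 1 + 1) - m (i + 1) = 2 * a (i + 1) + b (i + 1)"
    "n (i + 1) - n (i + 1 + 1) = (b (i + 1))\<^sup>2 / a (i + 1)"
    by (rule m_diff_up n_diff_up)+
  show "m (i + 1) - m (i - 1 + 1) = (a (i + 1))\<^sup>2 / b (i + 1)"
    "n (i - 1 + 1) - n (i + 1) = a (i + 1) + 2 * b (i + 1)"
    using m_diff_down[of "i + 1"] n_diff_down[of "i + 1"] by simp_all
qed

lemma reflect: "positive_solution (\<lambda>i. b (- i)) (\<lambda>i. a (- i)) (\<lambda>i. n (- i)) (\<lambda>i. m (- i))"
  unfolding positive_solution_def abmn_positive_iff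
proof (intro allI conjI)
  fix i
  show "0 < b (- i)" "0 < a (- i)" by (rule a_pos b_pos)+
  show "n (- (i + 1)) - n (- i) = 2 * b (- i) + a (- i)"
    "m (- i) - m (- (i + 1)) = (a (- i))\<^sup>2 / b (- i)"
    using n_diff_down[of "- i"] m_diff_down[of "- i"] unfolding minus_add_distrib diff_conv_add_uminus
    by (simp_all add: add.commute)
  show "n (- i) - n (- (i - 1)) = (b (- i))\<^sup>2 / a (- i)"
    "m (- (i - 1)) - m (- i) = b (- i) + 2 * a (- i)"
    using n_diff_up[of "- i"] m_diff_up[of "- i"] unfolding minus_diff_eq
    by (simp_all add: add.commute)
qed

lemma central_ratio_shift: "central_ratio (\<lambda>i. m (i + 1)) (\<lambda>i. n (i + 1)) = sfun (central_ratio m n)"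
  using local_ratio_succ[of 0] by (simp add: central_ratio_def local_ratio_def)

lemma central_ratio_reflect: "central_ratio (\<lambda>i. n (- i)) (\<lambda>i. m (- i)) = 1 / sfun (central_ratio m n)"
proof -
  have eq: "(n 0 - n 1) / (m 1 - m 0) = sfun (central_ratio m n)"
    using local_ratio_succ[of 0] by (simp add: central_ratio_def local_ratio_def)
  show ?thesis unfolding central_ratio_def[of "\<lambda>i. n (- i)"] by (simp flip: eq)
qed

end

lemma lim_top_eq: "(f \<longlongrightarrow> L) at_top \<Longrightarrow> lim_top f = L"
  unfolding lim_top_def by (rule tendsto_Lim) simp_all

lemma lim_bot_eq: "(f \<longlongrightarrow> L) at_bot \<Longrightarrow> lim_bot f = L"
  unfolding lim_bot_def by (rule tendsto_Lim) simp_all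

lemma has_limits_shift: "has_limits m n \<Longrightarrow> has_limits (\<lambda>i. m (i + 1)) (\<lambda>i. n (i + 1))"
  unfolding has_limits_def using tendsto_int_shift by blast

lemma has_limits_reflect: "has_limits m n \<Longrightarrow> has_limits (\<lambda>i. n (- i)) (\<lambda>i. m (- i))"
  unfolding has_limits_def filterlim_int_at_bot_iff by auto

lemma mina_margin_shift:
  assumes "has_limits m n" shows "mina_margin (\<lambda>i. m (i + 1)) (\<lambda>i. n (i + 1)) = mina_margin m n"
proof -
  obtain mt mb nt nb where lim: "(m \<longlongrightarrow> mt) at_top" "(m \<longlongrightarrow> mb) at_bot" "(n \<longlongrightarrow> nt) at_top" "(n \<longlongrightarrow> nb) at_bot"
    using assms unfolding has_limits_def by blast
  then show ?thesis
    unfolding mina_margin_def using tendsto_int_shift(1)[OF lim(1), of 1] tendsto_int_shift(2)[OF lim(2), of 1]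
      tendsto_int_shift(1)[OF lim(3), of 1] tendsto_int_shift(2)[OF lim(4), of 1]
    by (simp add: lim_top_eq lim_bot_eq)
qed

lemma mina_margin_reflect:
  assumes "has_limits m n" shows "mina_margin (\<lambda>i. n (- i)) (\<lambda>i. m (- i)) = 1 / mina_margin m n"
proof -
  obtain mt mb nt nb where lim: "(m \<longlongrightarrow> mt) at_top" "(m \<longlongrightarrow> mb) at_bot" "(n \<longlongrightarrow> nt) at_top" "(n \<longlongrightarrow> nb) at_bot"
    using assms unfolding has_limits_def by blast
  have "((\<lambda>i. m (- i)) \<longlongrightarrow> mb) at_top" "((\<lambda>i. n (- i)) \<longlongrightarrow> nb) at_top"
    using lim(2,4) by (simp_all add: filterlim_int_at_bot_iff)
  moreover have "((\<lambda>i. m (- i)) \<longlongrightarrow> mt) at_bot" "((\<lambda>i. n (- i)) \<longlongrightarrow> nt) at_bot"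
    using lim(1,3) filterlim_int_at_bot_iff[of "\<lambda>i. m (- i)"] filterlim_int_at_bot_iff[of "\<lambda>i. n (- i)"]
    by simp_all
  ultimately show ?thesis using lim unfolding mina_margin_def by (simp add: lim_top_eq lim_bot_eq)
qed

section \<open>The standard solution\<close>

lemma positive_solutions_eq_coefficients:
  assumes P: "positive_solution a b m n" and P': "positive_solution a' b' m' n'"
    and x: "central_ratio m n = central_ratio m' n'"
    and dm: "\<And>k. m (k + 1) - m k = m' (k + 1) - m' k"
  shows "a = a'" and "b = b'"
proof -
  interpret P: positive_solution a b m n by (rule P)
  interpret P': positive_solution a' b' m' n' by (rule P')
  have ab: "a k = a' k \<and> b k = b' k" for k
  proof -
    have "rho (a k / b k) = rho (a' k / b' k)"
      by (metis P.local_ratio_eq_rho P'.local_ratio_eq_rho P.local_ratio_eq_s_iter P'.local_ratio_eq_s_iter x)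
    then have t: "a k / b k = a' k / b' k"
      by (rule rho_inj[rotated 2]) (use P.a_pos P.b_pos P'.a_pos P'.b_pos in auto)
    define q where "q = a k / b k"
    have q: "0 < q" using P.a_pos[of k] P.b_pos[of k] by (simp add: q_def)
    have a: "a k = q * b k" using P.b_pos[of k] by (simp add: q_def)
    have a': "a' k = q * b' k" using P'.b_pos[of k] by (simp add: q_def t)
    have "2 * a k + b k = 2 * a' k + b' k"
      using dm[of k] P.m_diff_up[of k] P'.m_diff_up[of k] by simp
    then have "(2 * q + 1) * b k = (2 * q + 1) * b' k"
      unfolding a a' by (simp add: distrib_right mult.assoc)
    then have "b k = b' k" using q by simp
    then show ?thesis using a a' by simp
  qed
  then show "a = a'" "b = b'" by (simp_all add: fun_eq_iff)
qed

theorem standard_solution_unique: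
  assumes S: "abmn_standard a b m n" and S': "abmn_standard a' b' m' n'"
    and x: "central_ratio m n = central_ratio m' n'"
  shows "(a, b, m, n) = (a', b', m', n')"
proof -
  interpret P: positive_solution a b m n using S unfolding abmn_standard_def positive_solution_def by blast
  interpret P': positive_solution a' b' m' n' using S' unfolding abmn_standard_def positive_solution_def by blast
  have "(orbit_prod cfun (central_ratio m n) has_sum 1 / (m 0 - m (-1))) UNIV"
    using P.has_sum_orbit_prod_cfun[of 1 0] S unfolding abmn_standard_def by simp
  moreover have "(orbit_prod cfun (central_ratio m n) has_sum 1 / (m' 0 - m' (-1))) UNIV"
    using P'.has_sum_orbit_prod_cfun[of 1 0] S' x unfolding abmn_standard_def by simp
  ultimately have "m 0 - m (-1) = m' 0 - m' (-1)" using has_sum_unique by fastforce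
  then have dm: "m (k + 1) - m k = m' (k + 1) - m' k" for k
    using P.m_increment[of k] P'.m_increment[of k] x by simp
  have a: "a = a'" and b: "b = b'"
    using positive_solutions_eq_coefficients[OF P.positive_solution_axioms P'.positive_solution_axioms x dm]
    by simp_all
  have "m = m'"
    using S S' dm unfolding abmn_standard_def by (intro eq_if_same_increments[of m m' 0 at_bot]) auto
  moreover have "n = n'"
  proof (rule eq_if_same_increments[of n n' 0 at_top])
    show "n (k + 1) - n k = n' (k + 1) - n' k" for k
      using P.n_diff_up[of k] P'.n_diff_up[of k] a b by simp
  qed (use S S' in \<open>auto simp: abmn_standard_def\<close>)
  ultimately show ?thesis using a b by simp
qed

text \<open>The standard solution with central ratio \<open>x\<close>: \<open>a\<^sub>k / b\<^sub>k = std_quot x k\<close>, the increments of \<open>m\<close> are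
  \<open>P\<^sub>k / C\<close> and those of \<open>n\<close> are \<open>-x Q\<^sub>k / C\<close>, where \<open>P, Q\<close> are the orbit products of \<open>c, d\<close> and
  \<open>C = \<Sum>\<^sub>k P\<^sub>k\<close> normalises \<open>m\<close> to run from \<open>0\<close> to \<open>1\<close>.\<close>

definition std_quot :: "real \<Rightarrow> int \<Rightarrow> real" where
  "std_quot x k = rho_inv (s_iter k x)"

definition std_b :: "real \<Rightarrow> zseq" where
  "std_b x k = orbit_prod cfun x k / (orbit_sum cfun x * (2 * std_quot x k + 1))"

definition std_a :: "real \<Rightarrow> zseq" where
  "std_a x k = std_quot x k * std_b x k"

definition std_m :: "real \<Rightarrow> zseq" where
  "std_m x k = (\<Sum>j. orbit_prod cfun x (k - int (Suc j))) / orbit_sum cfun x"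

definition std_n :: "real \<Rightarrow> zseq" where
  "std_n x k = x / orbit_sum cfun x * (\<Sum>j. orbit_prod dfun x (k + int j))"

context
  fixes x :: real
  assumes x: "0 < x"
begin

lemma std_quot_pos: "0 < std_quot x k"
  unfolding std_quot_def by (rule rho_inv_pos[OF s_iter_pos[OF x]])

lemma rho_std_quot: "rho (std_quot x k) = s_iter k x"
  unfolding std_quot_def by (rule rho_rho_inv[OF s_iter_pos[OF x]])

lemma std_quot_succ:
  "(std_quot x (k + 1))\<^sup>2 = std_quot x k * (2 * std_quot x k + 1) * (std_quot x (k + 1) + 2)"
proof -
  define t t' where "t = std_quot x k" and "t' = std_quot x (k + 1)"
  have pos: "0 < t" "0 < t'" using std_quot_pos by (simp_all add: t_def t'_def)
  have "rho t' = 1 / (t * (2 * t + 1))"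
    using sfun_rho[OF pos(1)] by (simp add: t_def t'_def rho_std_quot s_iter_succ[OF x])
  moreover have "0 < t * (2 * t + 1)" using pos by simp
  ultimately show ?thesis
    using pos unfolding rho_def t_def[symmetric] t'_def[symmetric] by (simp add: field_simps)
qed

lemma orbit_prod_cfun_std_quot:
  "orbit_prod cfun x k = orbit_prod cfun x (k - 1) * (2 * std_quot x k + 1) / (std_quot x k)\<^sup>2"
  using c_weight.orbit_prod_succ[OF x, of "k - 1"] cfun_rho[OF std_quot_pos] by (simp add: rho_std_quot)

lemma orbit_prod_dfun_std_quot:
  "orbit_prod dfun x k = orbit_prod dfun x (k - 1) / (std_quot x k * (std_quot x k + 2))"
  using d_weight.orbit_prod_succ[OF x, of "k - 1"] dfun_rho[OF std_quot_pos] by (simp add: rho_std_quot)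

text \<open>The ratio of the two sides is invariant under \<open>k \<mapsto> k + 1\<close> by \<open>std_quot_succ\<close>, and equals
  \<open>1\<close> at \<open>k = 0\<close> since \<open>x = rho (std_quot x 0)\<close>.\<close>
lemma orbit_prod_dfun_cfun:
  "x * orbit_prod dfun x (k - 1) * (2 * std_quot x k + 1) = (std_quot x k + 2) * orbit_prod cfun x k"
proof -
  define r where
    "r k = x * orbit_prod dfun x (k - 1) * (2 * std_quot x k + 1) / ((std_quot x k + 2) * orbit_prod cfun x k)" for k
  have P_nz: "orbit_prod cfun x k \<noteq> 0" for k using c_weight.orbit_prod_pos[OF x, of k] by simp
  have "r (k + 1) = r k" for k
  proof -
    define t t' P Q where "t = std_quot x k" and "t' = std_quot x (k + 1)"
      and "P = orbit_prod cfun x k" and "Q = orbit_prod dfun x (k - 1)"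
    have "0 < t" "0 < t'" using std_quot_pos by (simp_all add: t_def t'_def)
    then have nz: "t \<noteq> 0" "t' \<noteq> 0" "P \<noteq> 0" "t + 2 \<noteq> 0" "t' + 2 \<noteq> 0" "2 * t + 1 \<noteq> 0" "2 * t' + 1 \<noteq> 0"
      using P_nz by (auto simp: P_def)
    have "r (k + 1) = x * (Q / (t * (t + 2))) * (2 * t' + 1) / ((t' + 2) * (P * (2 * t' + 1) / t'\<^sup>2))"
      using orbit_prod_dfun_std_quot[of k] orbit_prod_cfun_std_quot[of "k + 1"]
      by (simp add: r_def t_def t'_def P_def Q_def)
    also have "\<dots> = x * Q * (2 * t + 1) / ((t + 2) * P)"
      unfolding std_quot_succ[of k, folded t_def t'_def] using nz by (simp add: divide_simps)
    finally show ?thesis by (simp add: r_def t_def P_def Q_def)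
  qed
  moreover have "r 0 = 1"
  proof -
    define t where "t = std_quot x 0"
    have "0 < t" using std_quot_pos by (simp add: t_def)
    then have nz: "t \<noteq> 0" "t + 2 \<noteq> 0" "2 * t + 1 \<noteq> 0" by auto
    have P0: "orbit_prod cfun x 0 = (2 * t + 1) / t\<^sup>2"
      using orbit_prod_cfun_std_quot[of 0] by (simp add: t_def)
    have x0: "x = (t + 2) / t\<^sup>2" using rho_std_quot[of 0] by (simp add: rho_def t_def)
    have "r 0 = x * (2 * t + 1) / ((t + 2) * orbit_prod cfun x 0)" by (simp add: r_def t_def)
    also have "\<dots> = 1" unfolding P0 using nz by (simp add: x0 divide_simps)
    finally show ?thesis .
  qed
  ultimately have "r k = 1" using int_shift_invariant[of r] by metis
  then show ?thesis using P_nz[of k] std_quot_pos[of k] by (simp add: r_def field_simps)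
qed

lemma std_m_diff: "std_m x (k + 1) - std_m x k = orbit_prod cfun x k / orbit_sum cfun x"
proof -
  have "summable (\<lambda>j. orbit_prod cfun x (k - int j))"
    by (rule summable_int_shift_backward[OF c_weight.summable_orbit_prod(2)[OF x]])
  then have "(\<Sum>j. orbit_prod cfun x (k - int j)) = orbit_prod cfun x k + (\<Sum>j. orbit_prod cfun x (k - int (Suc j)))"
    using suminf_split_head by fastforce
  then show ?thesis by (simp add: std_m_def add_divide_distrib)
qed

lemma std_n_diff: "std_n x k - std_n x (k + 1) = x * orbit_prod dfun x k / orbit_sum cfun x"
proof -
  have "summable (\<lambda>j. orbit_prod dfun x (k + int j))"
    by (rule summable_int_shift[OF d_weight.summable_orbit_prod(1)[OF x]])
  then have "(\<Sum>j. orbit_prod dfun x (k + int j)) = orbit_prod dfun x k + (\<Sum>j. orbit_prod dfun x (k + 1 + int j))"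
    using suminf_split_head by (fastforce simp: ac_simps)
  then show ?thesis by (simp add: std_n_def algebra_simps)
qed

lemma std_m_tendsto: "(std_m x \<longlongrightarrow> 1) at_top" "(std_m x \<longlongrightarrow> 0) at_bot"
proof -
  define C U V where "C = orbit_sum cfun x"
    and "U = (\<Sum>n. orbit_prod cfun x (int n))" and "V = (\<Sum>n. orbit_prod cfun x (- int (Suc n)))"
  have "0 < C" unfolding C_def by (rule c_weight.orbit_sum_pos[OF x])
  have "C = U + V" unfolding C_def U_def V_def by (rule c_weight.orbit_sum_eq[OF x])
  have "std_m x 0 = V / C" by (simp add: std_m_def C_def V_def)
  moreover have "(\<lambda>n. orbit_prod cfun x (int n) / C) sums (U / C)"
    and "(\<lambda>n. orbit_prod cfun x (- int (Suc n)) / C) sums (V / C)"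
    unfolding U_def V_def using c_weight.summable_orbit_prod[OF x] by (auto intro: sums_divide summable_sums)
  moreover have "std_m x (k + 1) - std_m x k = orbit_prod cfun x k / C" for k
    unfolding C_def by (rule std_m_diff)
  ultimately have "(std_m x \<longlongrightarrow> V / C + U / C) at_top" "(std_m x \<longlongrightarrow> V / C - V / C) at_bot"
    using tendsto_of_increments[where f = "std_m x" and d = "\<lambda>k. orbit_prod cfun x k / C"] by metis+
  then show "(std_m x \<longlongrightarrow> 1) at_top" "(std_m x \<longlongrightarrow> 0) at_bot"
    using \<open>0 < C\<close> \<open>C = U + V\<close> by (simp_all add: add_divide_distrib[symmetric] add.commute)
qed

lemma std_n_tendsto: "(std_n x \<longlongrightarrow> 0) at_top" "\<exists>L. (std_n x \<longlongrightarrow> L) at_bot"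
proof -
  define d where "d k = - (x * orbit_prod dfun x k / orbit_sum cfun x)" for k
  have inc: "std_n x (k + 1) - std_n x k = d k" for k using std_n_diff[of k] by (simp add: d_def)
  define U V where "U = (\<Sum>n. orbit_prod dfun x (int n))" and "V = (\<Sum>n. orbit_prod dfun x (- int (Suc n)))"
  have "(\<lambda>n. d (int n)) sums (- (x * U / orbit_sum cfun x))"
    "(\<lambda>n. d (- int (Suc n))) sums (- (x * V / orbit_sum cfun x))"
    unfolding d_def U_def V_def using d_weight.summable_orbit_prod[OF x]
    by (auto intro!: sums_minus sums_divide sums_mult summable_sums)
  note lim = tendsto_of_increments[where f = "std_n x" and d = d, OF inc this]
  have "std_n x 0 = x * U / orbit_sum cfun x" by (simp add: std_n_def U_def)
  then show "(std_n x \<longlongrightarrow> 0) at_top" "\<exists>L. (std_n x \<longlongrightarrow> L) at_bot"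
    using lim by auto
qed

lemma std_positive: "abmn_positive (std_a x) (std_b x) (std_m x) (std_n x)"
  unfolding abmn_positive_iff
proof (intro allI conjI)
  fix i
  define t P C where "t = std_quot x i" and "P = orbit_prod cfun x i" and "C = orbit_sum cfun x"
  have pos: "0 < t" "0 < P" "0 < C"
    unfolding t_def P_def C_def using std_quot_pos c_weight.orbit_prod_pos[OF x] c_weight.orbit_sum_pos[OF x]
    by auto
  then have nz: "t \<noteq> 0" "P \<noteq> 0" "C \<noteq> 0" "t + 2 \<noteq> 0" "2 * t + 1 \<noteq> 0" by auto
  have b: "std_b x i = P / (C * (2 * t + 1))" and a: "std_a x i = t * (P / (C * (2 * t + 1)))"
    by (simp_all add: std_a_def std_b_def t_def P_def C_def)
  have P: "P = orbit_prod cfun x (i - 1) * (2 * t + 1) / t\<^sup>2"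
    unfolding P_def t_def by (rule orbit_prod_cfun_std_quot)
  have xQ: "x * orbit_prod dfun x (i - 1) = (t + 2) * P / (2 * t + 1)"
    using orbit_prod_dfun_cfun[of i] nz by (simp add: t_def P_def field_simps)
  show "0 < std_b x i" "0 < std_a x i" unfolding a b using pos by simp_all
  have "2 * (t * (P / (C * (2 * t + 1)))) + P / (C * (2 * t + 1)) = P / C"
    using nz by (simp add: divide_simps) (simp add: algebra_simps)
  then show "std_m x (i + 1) - std_m x i = 2 * std_a x i + std_b x i"
    using std_m_diff[of i] unfolding a b by (simp add: P_def C_def)
  show "std_m x i - std_m x (i - 1) = (std_a x i)\<^sup>2 / std_b x i"
    using std_m_diff[of "i - 1"] nz unfolding a b P by (simp add: C_def divide_simps power2_eq_square)
  show "std_n x (i - 1) - std_n x i = std_a x i + 2 * std_b x i"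
    using std_n_diff[of "i - 1"] nz xQ unfolding a b by (simp add: C_def divide_simps) (simp add: algebra_simps)
  show "std_n x i - std_n x (i + 1) = (std_b x i)\<^sup>2 / std_a x i"
    using std_n_diff[of i] nz xQ unfolding a b orbit_prod_dfun_std_quot[of i] t_def[symmetric]
    by (simp add: C_def divide_simps power2_eq_square) (simp add: ac_simps)
qed

lemma std_standard: "abmn_standard (std_a x) (std_b x) (std_m x) (std_n x)"
  unfolding abmn_standard_def has_limits_def using std_positive std_m_tendsto std_n_tendsto by blast

lemma central_ratio_std: "central_ratio (std_m x) (std_n x) = x"
  using std_m_diff[of "- 1"] std_n_diff[of "- 1"] c_weight.orbit_sum_pos[OF x]
  by (simp add: central_ratio_def)

end

lemma standard_sol_eq: assumes "0 < x" shows "standard_sol x = (std_a x, std_b x, std_m x, std_n x)"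
  unfolding standard_sol_def
proof (rule the_equality)
  show "case (std_a x, std_b x, std_m x, std_n x) of (a, b, m, n) \<Rightarrow> abmn_standard a b m n \<and> central_ratio m n = x"
    using std_standard[OF assms] central_ratio_std[OF assms] by simp
next
  fix p assume "case p of (a, b, m, n) \<Rightarrow> abmn_standard a b m n \<and> central_ratio m n = x"
  then obtain a b m n where "p = (a, b, m, n)" "abmn_standard a b m n" "central_ratio m n = x"
    by (cases p) auto
  then show "p = (std_a x, std_b x, std_m x, std_n x)"
    using standard_solution_unique[OF _ std_standard[OF assms]] central_ratio_std[OF assms] by simp
qed

lemma positive_solution_std: "0 < x \<Longrightarrow> positive_solution (std_a x) (std_b x) (std_m x) (std_n x)"
  unfolding positive_solution_def by (rule std_positive)

lemma has_limits_std: "0 < x \<Longrightarrow> has_limits (std_m x) (std_n x)"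
  using std_standard unfolding abmn_standard_def by blast

lemma mina_margin_std: "0 < x \<Longrightarrow> mina_margin (std_m x) (std_n x) = margin_fun x"
  using positive_solution.mina_margin_eq_margin_fun[OF positive_solution_std has_limits_std]
  by (simp add: central_ratio_std)

lemma mina_map_eq_margin_fun: "0 < x \<Longrightarrow> mina_map x = margin_fun x"
  unfolding mina_map_def by (simp add: standard_sol_eq mina_margin_std)

section \<open>The Mina margin map\<close>

lemma margin_fun_sfun: assumes "0 < x" shows "margin_fun (sfun x) = margin_fun x"
proof -
  interpret positive_solution "std_a x" "std_b x" "std_m x" "std_n x"
    using positive_solution_std[OF assms] .
  interpret shifted: positive_solution "\<lambda>i. std_a x (i + 1)" "\<lambda>i. std_b x (i + 1)" "\<lambda>i. std_m x (i + 1)" "\<lambda>i. std_n x (i + 1)"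
    by (rule shift)
  show ?thesis
    using shifted.mina_margin_eq_margin_fun[OF has_limits_shift[OF has_limits_std[OF assms]]]
      mina_margin_shift[OF has_limits_std[OF assms]] mina_margin_std[OF assms]
    by (simp add: central_ratio_shift central_ratio_std[OF assms])
qed

lemma margin_fun_recip_sfun: assumes "0 < x" shows "margin_fun (1 / sfun x) = 1 / margin_fun x"
proof -
  interpret positive_solution "std_a x" "std_b x" "std_m x" "std_n x"
    using positive_solution_std[OF assms] .
  interpret reflected: positive_solution "\<lambda>i. std_b x (- i)" "\<lambda>i. std_a x (- i)" "\<lambda>i. std_n x (- i)" "\<lambda>i. std_m x (- i)"
    by (rule reflect)
  show ?thesis
    using reflected.mina_margin_eq_margin_fun[OF has_limits_reflect[OF has_limits_std[OF assms]]]
      mina_margin_reflect[OF has_limits_std[OF assms]] mina_margin_std[OF assms]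
    by (simp add: central_ratio_reflect central_ratio_std[OF assms])
qed

lemma margin_fun_recip: assumes "0 < x" shows "margin_fun (1 / x) = 1 / margin_fun x"
  using margin_fun_recip_sfun[OF sfun_inv_pos[OF assms]] margin_fun_sfun[OF sfun_inv_pos[OF assms]]
  by (simp add: sfun_sfun_inv[OF assms])

lemma margin_fun_pos: "0 < x \<Longrightarrow> 0 < margin_fun x"
  unfolding margin_fun_def using c_weight.orbit_sum_pos d_weight.orbit_sum_pos by simp

lemma continuous_on_margin_fun: "continuous_on {0<..} margin_fun"
  unfolding margin_fun_def[abs_def]
  using c_weight.continuous_on_orbit_sum d_weight.continuous_on_orbit_sum c_weight.orbit_sum_pos
  by (intro continuous_intros) (auto simp: less_imp_neq[symmetric])

lemma margin_fun_s_iter: assumes "0 < x" shows "margin_fun (s_iter k x) = margin_fun x"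
proof (induction k rule: int_induct[where k = 0])
  case (step1 i)
  then show ?case by (simp add: s_iter_succ[OF assms] margin_fun_sfun s_iter_pos[OF assms])
next
  case (step2 i)
  then show ?case
    using margin_fun_sfun[OF sfun_inv_pos[OF s_iter_pos[OF assms]]]
    by (simp add: s_iter_pred[OF assms] sfun_sfun_inv s_iter_pos[OF assms])
qed simp

lemma margin_fun_image_1_10: "margin_fun ` {0<..} = margin_fun ` {1..10}"
proof (intro equalityI subsetI)
  fix z assume "z \<in> margin_fun ` {0<..}"
  then obtain x where x: "0 < x" "z = margin_fun x" by auto
  then obtain k where "s_iter k x \<in> {1..10}" using s_iter_in_1_10 by blast
  then show "z \<in> margin_fun ` {1..10}" using x margin_fun_s_iter by (metis image_eqI)
qed auto

lemma margin_fun_range: obtains lam where "0 < lam" "lam \<le> 1" "margin_fun ` {0<..} = {lam..1 / lam}"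
proof -
  have "continuous_on {1..10} margin_fun"
    using continuous_on_margin_fun by (rule continuous_on_subset) auto
  then have "\<exists>lam. 0 < lam \<and> lam \<le> 1 \<and> margin_fun ` {0<..} = {lam..1 / lam}"
    by (rule image_eq_reciprocal_interval)
      (auto simp: margin_fun_image_1_10 margin_fun_recip margin_fun_pos)
  then show ?thesis using that by blast
qed

lemma mina_margins_eq_range_margin_fun:
  "{mina_margin m n | a b m n. abmn_positive a b m n \<and> has_limits m n} = margin_fun ` {0<..}"
proof (intro equalityI subsetI)
  fix z assume "z \<in> {mina_margin m n | a b m n. abmn_positive a b m n \<and> has_limits m n}"
  then obtain a b m n where P: "positive_solution a b m n" "has_limits m n" and z: "z = mina_margin m n"
    unfolding positive_solution_def by blast
  then show "z \<in> margin_fun ` {0<..}"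
    using positive_solution.mina_margin_eq_margin_fun[OF P] positive_solution.central_ratio_pos[OF P(1)]
    by auto
next
  fix z assume "z \<in> margin_fun ` {0<..}"
  then obtain x where "0 < x" "z = margin_fun x" by auto
  then have "abmn_positive (std_a x) (std_b x) (std_m x) (std_n x)" "has_limits (std_m x) (std_n x)"
    "z = mina_margin (std_m x) (std_n x)"
    using std_positive has_limits_std mina_margin_std by auto
  then show "z \<in> {mina_margin m n | a b m n. abmn_positive a b m n \<and> has_limits m n}"
    by blast
qed

section \<open>A numerical bound\<close>

text \<open>Enclosures of \<open>\<omega>\<close> along an orbit propagate through \<open>\<omega>(s y)\<^sup>2 = 8 s\<^sub>\<omega>(\<omega> y) + 1\<close>
  with \<open>s\<^sub>\<omega>\<close> increasing, using only rational arithmetic.\<close>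

lemma omega_sfun_lower:
  assumes "0 < y" "1 \<le> w" "w \<le> omega y" "v\<^sup>2 \<le> 8 * s_of_omega w + 1"
  shows "v \<le> omega (sfun y)"
proof (cases "v \<le> 0")
  case False
  have "8 * s_of_omega w + 1 \<le> (omega (sfun y))\<^sup>2"
    using s_of_omega_mono[OF assms(2,3)] omega_sfun_sq[OF assms(1)] by simp
  with assms(4) have "v\<^sup>2 \<le> (omega (sfun y))\<^sup>2" by linarith
  then show ?thesis using omega_gt_1[OF sfun_pos[OF assms(1)]] by (auto intro: power2_le_imp_le)
qed (use omega_gt_1[OF sfun_pos[OF assms(1)]] in simp)

lemma omega_sfun_upper:
  assumes "0 < y" "omega y \<le> w" "8 * s_of_omega w + 1 \<le> v\<^sup>2" "0 \<le> v"
  shows "omega (sfun y) \<le> v"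
proof -
  have "(omega (sfun y))\<^sup>2 \<le> 8 * s_of_omega w + 1"
    using s_of_omega_mono[OF _ assms(2)] omega_gt_1[OF assms(1)] omega_sfun_sq[OF assms(1)] by simp
  with assms(3) have "(omega (sfun y))\<^sup>2 \<le> v\<^sup>2" by linarith
  then show ?thesis using assms(4) by (auto intro: power2_le_imp_le)
qed

lemma omega_sfun_inv_lower:
  assumes "0 < y" "0 \<le> w" "w \<le> omega y" "1 \<le> v" "8 * s_of_omega v + 1 \<le> w\<^sup>2"
  shows "v \<le> omega (sfun_inv y)"
proof (rule ccontr)
  assume "\<not> v \<le> omega (sfun_inv y)"
  then have "s_of_omega (omega (sfun_inv y)) < s_of_omega v"
    using omega_gt_1[OF sfun_inv_pos[OF assms(1)]] by (intro s_of_omega_strict_mono) auto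
  moreover have "w\<^sup>2 \<le> (omega y)\<^sup>2" using power_mono[OF assms(3,2)] .
  ultimately show False
    using assms(5) omega_sfun_sq[OF sfun_inv_pos[OF assms(1)]] by (simp add: sfun_sfun_inv[OF assms(1)])
qed

lemma omega_sfun_inv_upper:
  assumes "0 < y" "omega y \<le> w" "1 \<le> v" "w\<^sup>2 \<le> 8 * s_of_omega v + 1"
  shows "omega (sfun_inv y) \<le> v"
proof (rule ccontr)
  assume "\<not> omega (sfun_inv y) \<le> v"
  then have "s_of_omega v < s_of_omega (omega (sfun_inv y))"
    using assms(3) by (intro s_of_omega_strict_mono) auto
  moreover have "(omega y)\<^sup>2 \<le> w\<^sup>2"
    using power_mono[OF assms(2)] omega_gt_1[OF assms(1)] by simp
  ultimately show False
    using assms(4) omega_sfun_sq[OF sfun_inv_pos[OF assms(1)]] by (simp add: sfun_sfun_inv[OF assms(1)])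
qed

lemma cfac_le_cfun: "0 \<le> w \<Longrightarrow> w \<le> omega y \<Longrightarrow> cfac_of_omega w \<le> cfun y - 1"
  by (simp add: cfun_eq_cfac_of_omega cfac_of_omega_mono)

lemma cfun_le_cfac: "0 < y \<Longrightarrow> omega y \<le> w \<Longrightarrow> cfun y - 1 \<le> cfac_of_omega w"
  using omega_gt_1[of y] by (simp add: cfun_eq_cfac_of_omega cfac_of_omega_mono)

lemma dfac_le_dfun: "0 < y \<Longrightarrow> 1 \<le> w \<Longrightarrow> w \<le> omega y \<Longrightarrow> dfac_of_omega w \<le> dfun y - 1"
  by (simp add: dfun_eq_dfac_of_omega dfac_of_omega_mono)

lemma dfun_le_dfac: "0 < y \<Longrightarrow> omega y \<le> w \<Longrightarrow> dfun y - 1 \<le> dfac_of_omega w"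
  using omega_gt_1[of y] by (simp add: dfun_eq_dfac_of_omega dfac_of_omega_mono)

text \<open>\<open>x\<^sub>0\<close> lies close to the minimiser of the Mina margin map and has the rational \<open>\<omega>(x\<^sub>0) = 6.63\<close>.\<close>
definition x\<^sub>0 :: real where "x\<^sub>0 = 5.3696125"

lemma omega_x0: "omega x\<^sub>0 = 6.63"
  unfolding omega_def x\<^sub>0_def by (rule real_sqrt_unique) (simp_all add: power2_eq_square)

lemma x0_pos: "0 < x\<^sub>0"
  by (simp add: x\<^sub>0_def)

lemma omega_s_iter_x0_forward:
  shows "2.377193 \<le> omega (s_iter 1 x\<^sub>0)" "omega (s_iter 1 x\<^sub>0) \<le> 2.377194"
    and "1.185127 \<le> omega (s_iter 2 x\<^sub>0)" "omega (s_iter 2 x\<^sub>0) \<le> 1.185128"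
    and "1.004178 \<le> omega (s_iter 3 x\<^sub>0)"
proof -
  note pos = s_iter_pos[OF x0_pos] and succ = s_iter_succ[OF x0_pos]
  have w0: "6.63 \<le> omega (s_iter 0 x\<^sub>0)" "omega (s_iter 0 x\<^sub>0) \<le> 6.63" using omega_x0 by simp_all
  have "2.377193 \<le> omega (sfun (s_iter 0 x\<^sub>0))" "omega (sfun (s_iter 0 x\<^sub>0)) \<le> 2.377194"
    by (rule omega_sfun_lower[OF pos _ w0(1)] omega_sfun_upper[OF pos w0(2)];
        simp add: s_of_omega_def power2_eq_square)+
  then show w1: "2.377193 \<le> omega (s_iter 1 x\<^sub>0)" "omega (s_iter 1 x\<^sub>0) \<le> 2.377194"
    using succ[of 0] by simp_all
  have "1.185127 \<le> omega (sfun (s_iter 1 x\<^sub>0))" "omega (sfun (s_iter 1 x\<^sub>0)) \<le> 1.185128"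
    by (rule omega_sfun_lower[OF pos _ w1(1)] omega_sfun_upper[OF pos w1(2)];
        simp add: s_of_omega_def power2_eq_square)+
  then show w2: "1.185127 \<le> omega (s_iter 2 x\<^sub>0)" "omega (s_iter 2 x\<^sub>0) \<le> 1.185128"
    using succ[of 1] by simp_all
  have "1.004178 \<le> omega (sfun (s_iter 2 x\<^sub>0))"
    by (rule omega_sfun_lower[OF pos _ w2(1)]) (simp_all add: s_of_omega_def power2_eq_square)
  then show "1.004178 \<le> omega (s_iter 3 x\<^sub>0)"
    using succ[of 2] by simp
qed

lemma omega_s_iter_x0_backward:
  shows "28.684978 \<le> omega (s_iter (-1) x\<^sub>0)" "omega (s_iter (-1) x\<^sub>0) \<le> 28.684979"
    and "419.764015 \<le> omega (s_iter (-2) x\<^sub>0)"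
    and "88109.413418 \<le> omega (s_iter (-3) x\<^sub>0)"
proof -
  note pos = s_iter_pos[OF x0_pos] and pred = s_iter_pred[OF x0_pos]
  have w0: "6.63 \<le> omega (s_iter 0 x\<^sub>0)" "omega (s_iter 0 x\<^sub>0) \<le> 6.63" using omega_x0 by simp_all
  have "28.684978 \<le> omega (sfun_inv (s_iter 0 x\<^sub>0))" "omega (sfun_inv (s_iter 0 x\<^sub>0)) \<le> 28.684979"
    by (rule omega_sfun_inv_lower[OF pos _ w0(1)] omega_sfun_inv_upper[OF pos w0(2)];
        simp add: s_of_omega_def power2_eq_square)+
  then show wm1: "28.684978 \<le> omega (s_iter (-1) x\<^sub>0)" "omega (s_iter (-1) x\<^sub>0) \<le> 28.684979"
    using pred[of 0] by simp_all
  have "419.764015 \<le> omega (sfun_inv (s_iter (-1) x\<^sub>0))"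
    by (rule omega_sfun_inv_lower[OF pos _ wm1(1)]) (simp_all add: s_of_omega_def power2_eq_square)
  then show wm2: "419.764015 \<le> omega (s_iter (-2) x\<^sub>0)"
    using pred[of "-1"] by simp
  have "88109.413418 \<le> omega (sfun_inv (s_iter (-2) x\<^sub>0))"
    by (rule omega_sfun_inv_lower[OF pos _ wm2]) (simp_all add: s_of_omega_def power2_eq_square)
  then show "88109.413418 \<le> omega (s_iter (-3) x\<^sub>0)"
    using pred[of "-2"] by simp
qed

lemma cfun_s_iter_x0_bounds:
  shows "cfac_of_omega 6.63 \<le> cfun (s_iter 0 x\<^sub>0) - 1" "cfac_of_omega 2.377193 \<le> cfun (s_iter 1 x\<^sub>0) - 1"
    and "cfac_of_omega 1.185127 \<le> cfun (s_iter 2 x\<^sub>0) - 1" "cfac_of_omega 1.004178 \<le> cfun (s_iter 3 x\<^sub>0) - 1"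
    and "cfun (s_iter (-1) x\<^sub>0) - 1 \<le> cfac_of_omega 28.684979"
proof -
  have "6.63 \<le> omega (s_iter 0 x\<^sub>0)" using omega_x0 by simp
  then show "cfac_of_omega 6.63 \<le> cfun (s_iter 0 x\<^sub>0) - 1" "cfac_of_omega 2.377193 \<le> cfun (s_iter 1 x\<^sub>0) - 1"
    "cfac_of_omega 1.185127 \<le> cfun (s_iter 2 x\<^sub>0) - 1" "cfac_of_omega 1.004178 \<le> cfun (s_iter 3 x\<^sub>0) - 1"
    "cfun (s_iter (-1) x\<^sub>0) - 1 \<le> cfac_of_omega 28.684979"
    using omega_s_iter_x0_forward omega_s_iter_x0_backward
    by (auto intro: cfac_le_cfun cfun_le_cfac s_iter_pos[OF x0_pos])
qed

lemma dfun_s_iter_x0_bounds: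
  shows "dfun (s_iter 0 x\<^sub>0) - 1 \<le> dfac_of_omega 6.63" "dfun (s_iter 1 x\<^sub>0) - 1 \<le> dfac_of_omega 2.377194"
    and "dfun (s_iter 2 x\<^sub>0) - 1 \<le> dfac_of_omega 1.185128"
    and "dfac_of_omega 28.684978 \<le> dfun (s_iter (-1) x\<^sub>0) - 1"
    and "dfac_of_omega 419.764015 \<le> dfun (s_iter (-2) x\<^sub>0) - 1"
    and "dfac_of_omega 88109.413418 \<le> dfun (s_iter (-3) x\<^sub>0) - 1"
proof -
  note pos = s_iter_pos[OF x0_pos] and fwd = omega_s_iter_x0_forward and bwd = omega_s_iter_x0_backward
  have w0: "omega (s_iter 0 x\<^sub>0) \<le> 6.63" using omega_x0 by simp
  show "dfun (s_iter 0 x\<^sub>0) - 1 \<le> dfac_of_omega 6.63" "dfun (s_iter 1 x\<^sub>0) - 1 \<le> dfac_of_omega 2.377194"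
    "dfun (s_iter 2 x\<^sub>0) - 1 \<le> dfac_of_omega 1.185128"
    "dfac_of_omega 28.684978 \<le> dfun (s_iter (-1) x\<^sub>0) - 1"
    "dfac_of_omega 419.764015 \<le> dfun (s_iter (-2) x\<^sub>0) - 1"
    "dfac_of_omega 88109.413418 \<le> dfun (s_iter (-3) x\<^sub>0) - 1"
    by (rule dfun_le_dfac[OF pos w0] dfun_le_dfac[OF pos fwd(2)] dfun_le_dfac[OF pos fwd(4)]
        dfac_le_dfun[OF pos _ bwd(1)] dfac_le_dfun[OF pos _ bwd(3)] dfac_le_dfun[OF pos _ bwd(4)]; simp)+
qed

lemma orbit_sum_cfun_x0_ge:
  "cfac_of_omega 6.63 + cfac_of_omega 6.63 * cfac_of_omega 2.377193
     + cfac_of_omega 6.63 * cfac_of_omega 2.377193 * cfac_of_omega 1.185127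
     + cfac_of_omega 6.63 * cfac_of_omega 2.377193 * cfac_of_omega 1.185127 * cfac_of_omega 1.004178
     + (1 + 1 / cfac_of_omega 28.684979) \<le> orbit_sum cfun x\<^sub>0"
proof -
  let ?f = "\<lambda>k. cfun (s_iter k x\<^sub>0) - 1" and ?P = "orbit_prod cfun x\<^sub>0"
  note f = cfun_s_iter_x0_bounds
  have c: "0 \<le> cfac_of_omega 6.63" "0 \<le> cfac_of_omega 2.377193" "0 \<le> cfac_of_omega 1.185127"
    "0 \<le> cfac_of_omega 1.004178" "0 < cfac_of_omega 28.684979"
    by (simp_all add: cfac_of_omega_def)
  have P: "?P 0 = ?f 0" "?P 1 = ?P 0 * ?f 1" "?P 2 = ?P 1 * ?f 2" "?P 3 = ?P 2 * ?f 3"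
    "?P (-2) = 1 / ?f (-1)"
    using c_weight.orbit_prod_succ[OF x0_pos, of "-1"] c_weight.orbit_prod_succ[OF x0_pos, of 0]
      c_weight.orbit_prod_succ[OF x0_pos, of 1] c_weight.orbit_prod_succ[OF x0_pos, of 2]
      c_weight.orbit_prod_succ[OF x0_pos, of "-2"] c_weight.factor_pos[OF x0_pos, of "-1"]
    by (simp_all add: field_simps)
  have f_nonneg: "0 \<le> ?f k" and P_nonneg: "0 \<le> ?P k" for k
    using c_weight.factor_pos[OF x0_pos, of k] c_weight.orbit_prod_pos[OF x0_pos, of k] by simp_all
  have p1: "cfac_of_omega 6.63 * cfac_of_omega 2.377193 \<le> ?P 1"
    unfolding P using f c f_nonneg by (intro mult_mono) auto
  have p2: "cfac_of_omega 6.63 * cfac_of_omega 2.377193 * cfac_of_omega 1.185127 \<le> ?P 2"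
    unfolding P(3) using p1 f c f_nonneg P_nonneg by (intro mult_mono) auto
  have p3: "cfac_of_omega 6.63 * cfac_of_omega 2.377193 * cfac_of_omega 1.185127 * cfac_of_omega 1.004178 \<le> ?P 3"
    unfolding P(4) using p2 f c f_nonneg P_nonneg by (intro mult_mono) auto
  have "?P 0 + ?P 1 + ?P 2 + ?P 3 \<le> (\<Sum>n. ?P (int n))"
    using sum_le_suminf[OF c_weight.summable_orbit_prod(1)[OF x0_pos], of "{..<4}"] P_nonneg
    by (simp add: eval_nat_numeral)
  moreover have "?P (-1) + ?P (-2) \<le> (\<Sum>n. ?P (- int (Suc n)))"
    using sum_le_suminf[OF c_weight.summable_orbit_prod(2)[OF x0_pos], of "{..<2}"] P_nonneg
    by (simp add: eval_nat_numeral)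
  moreover have "1 / cfac_of_omega 28.684979 \<le> ?P (-2)"
    unfolding P(5) using f(5) c(5) c_weight.factor_pos[OF x0_pos, of "-1"] by (intro divide_left_mono) auto
  ultimately show ?thesis
    using c_weight.orbit_sum_eq[OF x0_pos] P(1) f(1) p1 p2 p3 by simp
qed

lemma orbit_sum_dfun_x0_le:
  "orbit_sum dfun x\<^sub>0 \<le> dfac_of_omega 6.63 + dfac_of_omega 6.63 * dfac_of_omega 2.377194 / (1 - dfac_of_omega 1.185128)
     + (1 + 1 / dfac_of_omega 28.684978
        + 1 / dfac_of_omega 28.684978 / dfac_of_omega 419.764015 / (1 - 1 / dfac_of_omega 88109.413418))"
proof -
  let ?g = "\<lambda>k. dfun (s_iter k x\<^sub>0) - 1" and ?Q = "orbit_prod dfun x\<^sub>0"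
  have g_pos: "0 < ?g k" for k by (rule d_weight.factor_pos[OF x0_pos])
  have Q_succ: "?Q (k + 1) = ?Q k * ?g (k + 1)" for k by (rule d_weight.orbit_prod_succ[OF x0_pos])
  note g = dfun_s_iter_x0_bounds
  define q M where "q = dfac_of_omega 1.185128" and "M = dfac_of_omega 88109.413418"
  have qM: "q < 1" "1 < M" by (simp_all add: q_def M_def dfac_of_omega_def power2_eq_square)
  have tail_pos: "(\<Sum>n. ?Q (int (n + 1))) \<le> ?Q 1 / (1 - q)"
    using d_weight.suminf_orbit_prod_tail_pos_le[OF x0_pos _ qM(1), of 1] g(3) by (simp add: q_def)
  have tail_neg: "(\<Sum>n. ?Q (- int (Suc (n + 2)))) \<le> ?Q (-3) / (1 - 1 / M)"
    using d_weight.suminf_orbit_prod_tail_neg_le[OF x0_pos _ qM(2), of 2] g(6) by (simp add: M_def)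
  have U: "(\<Sum>n. ?Q (int n)) = ?Q 0 + (\<Sum>n. ?Q (int (n + 1)))"
    using suminf_split_head[OF d_weight.summable_orbit_prod(1)[OF x0_pos]] by simp
  have V: "(\<Sum>n. ?Q (- int (Suc n))) = 1 + ?Q (-2) + (\<Sum>n. ?Q (- int (Suc (n + 2))))"
    using suminf_split_initial_segment[OF d_weight.summable_orbit_prod(2)[OF x0_pos], of 2]
    by (simp add: eval_nat_numeral)
  have Q: "?Q 0 = ?g 0" "?Q 1 = ?g 0 * ?g 1" using Q_succ[of "-1"] Q_succ[of 0] by simp_all
  have Qm: "?Q (-2) = 1 / ?g (-1)" "?Q (-3) = ?Q (-2) / ?g (-2)"
    using Q_succ[of "-2"] Q_succ[of "-3"] g_pos[of "-1"] g_pos[of "-2"] by (simp_all add: eq_divide_eq)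
  have "?Q 1 / (1 - q) \<le> dfac_of_omega 6.63 * dfac_of_omega 2.377194 / (1 - q)"
    unfolding Q using g g_pos qM
    by (intro divide_right_mono mult_mono) (auto intro: less_imp_le simp: dfac_of_omega_def)
  moreover have d: "0 < dfac_of_omega 28.684978" "0 < dfac_of_omega 419.764015"
    by (simp_all add: dfac_of_omega_def)
  then have g1: "1 / ?g (-1) \<le> 1 / dfac_of_omega 28.684978"
    using g(4) g_pos[of "-1"] by (intro divide_left_mono mult_pos_pos) auto
  moreover have "1 / ?g (-1) / ?g (-2) \<le> 1 / dfac_of_omega 28.684978 / dfac_of_omega 419.764015"
    by (rule divide_mono[OF g(5) g1]) (use d g_pos[of "-1"] in auto)
  then have "?Q (-3) / (1 - 1 / M) \<le> 1 / dfac_of_omega 28.684978 / dfac_of_omega 419.764015 / (1 - 1 / M)"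
    unfolding Qm(2) Qm(1) using qM by (intro divide_right_mono) auto
  ultimately show ?thesis
    using d_weight.orbit_sum_eq[OF x0_pos] U V tail_pos tail_neg g(1) Q(1) Qm(1)
    unfolding q_def[symmetric] M_def[symmetric] by linarith
qed

lemma margin_fun_x0_le: "margin_fun x\<^sub>0 \<le> 0.999904"
proof -
  define C D where
    "C = cfac_of_omega 6.63 + cfac_of_omega 6.63 * cfac_of_omega 2.377193
     + cfac_of_omega 6.63 * cfac_of_omega 2.377193 * cfac_of_omega 1.185127
     + cfac_of_omega 6.63 * cfac_of_omega 2.377193 * cfac_of_omega 1.185127 * cfac_of_omega 1.004178
     + (1 + 1 / cfac_of_omega 28.684979)"
  and "D = dfac_of_omega 6.63 + dfac_of_omega 6.63 * dfac_of_omega 2.377194 / (1 - dfac_of_omega 1.185128)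
     + (1 + 1 / dfac_of_omega 28.684978
        + 1 / dfac_of_omega 28.684978 / dfac_of_omega 419.764015 / (1 - 1 / dfac_of_omega 88109.413418))"
  have "C \<le> orbit_sum cfun x\<^sub>0" "orbit_sum dfun x\<^sub>0 \<le> D"
    unfolding C_def D_def by (rule orbit_sum_cfun_x0_ge orbit_sum_dfun_x0_le)+
  moreover have "0 < C" by (simp add: C_def cfac_of_omega_def)
  ultimately have "x\<^sub>0 * orbit_sum dfun x\<^sub>0 / orbit_sum cfun x\<^sub>0 \<le> x\<^sub>0 * D / C"
    using x0_pos d_weight.orbit_sum_pos[OF x0_pos] by (intro frac_le mult_left_mono) auto
  then have "margin_fun x\<^sub>0 \<le> x\<^sub>0 * D / C"
    unfolding margin_fun_def by (simp add: field_simps)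
  also have "\<dots> \<le> 0.999904"
    by (simp add: C_def D_def x\<^sub>0_def cfac_of_omega_def dfac_of_omega_def power2_eq_square)
  finally show ?thesis .
qed

lemma mina_map_image:
  "\<exists>lam::real. 0 < lam \<and> lam \<le> 0.999904 \<and> mina_map ` {0<..} = {lam .. 1/lam}
     \<and> lam = Inf {mina_margin m n | a b m n. abmn_positive a b m n \<and> has_limits m n}"
proof -
  obtain lam where lam: "0 < lam" "lam \<le> 1" "margin_fun ` {0<..} = {lam..1 / lam}"
    by (rule margin_fun_range)
  have "lam \<le> margin_fun x\<^sub>0" using lam(3) x0_pos by auto
  then have "lam \<le> 0.999904" using margin_fun_x0_le by simp
  moreover have "mina_map ` {0<..} = {lam..1 / lam}"
    using lam(3) mina_map_eq_margin_fun by (metis greaterThan_iff image_cong)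
  moreover have "lam * lam \<le> 1" using lam(1,2) mult_le_one[of lam lam] by simp
  then have "lam \<le> 1 / lam" using lam(1) by (simp add: field_simps)
  then have "lam = Inf {mina_margin m n | a b m n. abmn_positive a b m n \<and> has_limits m n}"
    unfolding mina_margins_eq_range_margin_fun lam(3) by simp
  ultimately show ?thesis using lam(1) by blast
qed

theorem mainTheorem14:
  shows "(\<forall>x>0. mina_map (sfun x) = mina_map x)
    \<and> continuous_on {0<..} mina_map
    \<and> (\<forall>x>0. (\<lambda>k. prodZ (\<lambda>i. c_iter i x - 1) k) summable_on (UNIV::int set)
            \<and> (\<lambda>k. prodZ (\<lambda>i. d_iter i x - 1) k) summable_on (UNIV::int set)
            \<and> mina_map x = inverse (\<Sum>\<^sub>\<infinity>k\<in>(UNIV::int set). prodZ (\<lambda>i. c_iter i x - 1) k)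
                 * x * (\<Sum>\<^sub>\<infinity>k\<in>(UNIV::int set). prodZ (\<lambda>i. d_iter i x - 1) k))
    \<and> (\<exists>lam::real. 0 < lam \<and> lam \<le> 0.999904
         \<and> mina_map ` {0<..} = {lam .. 1/lam}
         \<and> lam = Inf {mina_margin m n | a b m n. abmn_positive a b m n \<and> has_limits m n})"
proof -
  have map: "mina_map x = margin_fun x" if "0 < x" for x using mina_map_eq_margin_fun[OF that] .
  have prods: "(\<lambda>k. prodZ (\<lambda>i. c_iter i x - 1) k) = orbit_prod cfun x"
    "(\<lambda>k. prodZ (\<lambda>i. d_iter i x - 1) k) = orbit_prod dfun x" for x
    by (simp_all add: c_iter_def d_iter_def orbit_prod_def)
  have "continuous_on {0<..} mina_map"
    using continuous_on_margin_fun by (rule continuous_on_cong[THEN iffD1, rotated 2]) (auto simp: map)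
  moreover have "\<forall>x>0. mina_map (sfun x) = mina_map x" by (simp add: map margin_fun_sfun sfun_pos)
  moreover have "\<forall>x>0. orbit_prod cfun x summable_on UNIV \<and> orbit_prod dfun x summable_on UNIV
      \<and> mina_map x = inverse (orbit_sum cfun x) * x * orbit_sum dfun x"
    by (simp add: map margin_fun_def c_weight.summable_on_orbit_prod d_weight.summable_on_orbit_prod)
  ultimately show ?thesis using mina_map_image by (simp add: prods orbit_sum_def)
qed

end
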